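(* Let $(\rho_t)_{t\ge0}$ be an environment and $B$ a collision kernel satisfying (LBP). For any $s\ge0$ and starting type $v_0$, the linearized Kac process in environment $(\rho_t)$ starting from $v_0$ at time $s$ almost surely does not explode (the time of the $n$-th branching event tends to $\infty$ as $n\to\infty$). Moreover, for every $p\in[2,\infty)$ there is a constant $c(p)<\infty$ such that for all $v_0\in\mathbb{R}^d$ and all $t\ge s$, $$E_{(s,v_0)}\langle1+|v|^p,\Lambda_t\rangle\le(1+|v_0|^p)\exp\Big\{c(p)\int_s^t\langle1+|v|^{p+1},\rho_r\rangle\,dr\Big\},$$ and one can take $c(2)=8$.
   Context: Fix $d\ge2$; write $\langle f,\mu\rangle=\int f\,d\mu$. A collision kernel is a finite measurable kernel $B(v,d\sigma)$ from $\mathbb{R}^d$ to $S^{d-1}$ such that for every $u\in S^{d-1}$, $B(u,\cdot)$ is a probability measure supported on $S^{d-1}\setminus\{-u,u\}$; condition (LBP): $B(\lambda u,\cdot)=\lambda B(u,\cdot)$ for $\lambda\ge0$, $u\in S^{d-1}$, and $B(Ru,\cdot)=B(u,\cdot)\circ R^{-1}$ for every isometry $R$ of $S^{d-1}$. Post-collision velocities: $v'=\tfrac{v+v_*}{2}+\tfrac{|v-v_*|}{2}\sigma$, $v'_*=\tfrac{v+v_*}{2}-\tfrac{|v-v_*|}{2}\sigma$. An environment is a measurable family $(\rho_t)_{t\ge0}$ of measures on $\mathbb{R}^d$ with $\langle1,\rho_t\rangle\le1$ and $\langle|v|^2,\rho_t\rangle\le1$ for all $t$, and $\int_0^t\langle|v|^3,\rho_r\rangle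 dr<\infty$ for all $t$. The linearized Kac process in environment $(\rho_t)$ starting from $v_0\in\mathbb{R}^d$ at time $s$ is the continuous-time branching particle system with types in $\mathbb{R}^d\times\{-1,1\}$ started at time $s$ with one particle of type $(v_0,+1)$, in which each particle of type $(v,\epsilon)$, at rate $2\rho_t(dv_* )B(v-v_*,d\sigma)\,dt$ (over $v_*\in\mathbb{R}^d$, $\sigma\in S^{d-1}$), dies and is replaced by three particles of types $(v'(v,v_*,\sigma),\epsilon)$, $(v'_*(v,v_*,\sigma),\epsilon)$ and $(v_*,-\epsilon)$. $\Lambda_t$ denotes the (unnormalized) empirical measure on $\mathbb{R}^d$ of the velocities of all particles alive at time $t$ (ignoring signs), and $E_{(s,v_0)}$ denotes expectation for this process (the environment being fixed). *)

theory Defs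
  imports "HOL-Probability.Probability"
begin

text \<open>A collision kernel: a finite measurable kernel from the velocity space to the unit
  sphere (measures are taken on the Borel sets of the whole space and required to be
  concentrated on the sphere); for unit u, B u is a probability measure concentrated on
  the sphere minus {u, -u}.\<close>
definition collision_kernel :: "('a::euclidean_space \<Rightarrow> 'a measure) \<Rightarrow> bool" where
  "collision_kernel B \<longleftrightarrow>
     (\<forall>v. sets (B v) = sets (borel :: 'a measure)) \<and>
     (\<forall>v. emeasure (B v) (space (B v)) < \<infinity>) \<and>
     (\<forall>v. emeasure (B v) (- sphere 0 1) = 0) \<and>
     (\<forall>A \<in> sets (borel :: 'a measure). (\<lambda>v. emeasure (B v) A) \<in> borel_measurable borel) \<and>
     (\<forall>u \<in> sphere (0::'a) 1. emeasure (B u) (space (B u)) = 1 \<and>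
                              emeasure (B u) (- (sphere 0 1 - {u, -u})) = 0)"

definition LBP :: "('a::euclidean_space \<Rightarrow> 'a measure) \<Rightarrow> bool" where
  "LBP B \<longleftrightarrow>
     (\<forall>c::real. \<forall>u \<in> sphere (0::'a) 1. c \<ge> 0 \<longrightarrow> B (c *\<^sub>R u) = scale_measure (ennreal c) (B u)) \<and>
     (\<forall>R :: 'a \<Rightarrow> 'a.
        (\<forall>x \<in> sphere 0 1. \<forall>y \<in> sphere 0 1. dist (R x) (R y) = dist x y) \<and>
        R ` sphere 0 1 = sphere 0 1 \<longrightarrow>
        (\<forall>u \<in> sphere 0 1. \<forall>A \<in> sets (borel :: 'a measure). A \<subseteq> sphere 0 1 \<longrightarrow>
            emeasure (B (R u)) A = emeasure (B u) (R -` A \<inter> sphere 0 1)))"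

definition environment :: "(real \<Rightarrow> 'a::euclidean_space measure) \<Rightarrow> bool" where
  "environment \<rho> \<longleftrightarrow>
     (\<forall>t. sets (\<rho> t) = sets (borel :: 'a measure)) \<and>
     (\<forall>A \<in> sets (borel :: 'a measure).
         (\<lambda>t. emeasure (\<rho> t) A) \<in> borel_measurable (restrict_space borel {0..})) \<and>
     (\<forall>t\<ge>0. emeasure (\<rho> t) (space (\<rho> t)) \<le> 1) \<and>
     (\<forall>t\<ge>0. (\<integral>\<^sup>+ v. ennreal (norm v ^ 2) \<partial>\<rho> t) \<le> 1) \<and>
     (\<forall>t\<ge>0. (\<integral>\<^sup>+ r \<in> {0..t}. (\<integral>\<^sup>+ v. ennreal (norm v ^ 3) \<partial>\<rho> r) \<partial>lborel) < \<infinity>)"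

text \<open>States of the embedded jump chain: (time of the last branching event, number k of
  living particles, particles; only the slots 0..k-1 are meaningful). A particle is a
  velocity together with a sign (True = +1, False = -1). Time \<infinity> means that no
  further branching events occur.\<close>
type_synonym 'a kstate = "ereal \<times> nat \<times> (nat \<Rightarrow> 'a \<times> bool)"

definition kstate_space :: "'a::euclidean_space kstate measure" where
  "kstate_space = borel \<Otimes>\<^sub>M count_space UNIV \<Otimes>\<^sub>M
                  PiM UNIV (\<lambda>_. borel \<Otimes>\<^sub>M count_space UNIV)"

definition vpost :: "'a::euclidean_space \<Rightarrow> 'a \<Rightarrow> 'a \<Rightarrow> 'a" where
  "vpost v w \<sigma> = (1/2) *\<^sub>R (v + w) + (norm (v - w) / 2) *\<^sub>R \<sigma>"

definition vpost_star :: "'a::euclidean_space \<Rightarrow> 'a \<Rightarrow> 'a \<Rightarrow> 'a" where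
  "vpost_star v w \<sigma> = (1/2) *\<^sub>R (v + w) - (norm (v - w) / 2) *\<^sub>R \<sigma>"

definition branch :: "(nat \<Rightarrow> 'a::euclidean_space \<times> bool) \<Rightarrow> nat \<Rightarrow> nat \<Rightarrow> 'a \<Rightarrow> 'a
                       \<Rightarrow> (nat \<Rightarrow> 'a \<times> bool)" where
  "branch f k i w \<sigma> =
     (let v = fst (f i); e = snd (f i) in
      f(i := (vpost v w \<sigma>, e), k := (vpost_star v w \<sigma>, e), Suc k := (w, \<not> e)))"

definition kac_rate :: "('a::euclidean_space \<Rightarrow> 'a measure) \<Rightarrow> (real \<Rightarrow> 'a measure)
                        \<Rightarrow> real \<Rightarrow> 'a \<Rightarrow> ennreal" where
  "kac_rate B \<rho> r v = (\<integral>\<^sup>+ w. 2 * emeasure (B (v - w)) (space (B (v - w))) \<partial>\<rho> r)"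

definition kac_total_rate :: "('a::euclidean_space \<Rightarrow> 'a measure) \<Rightarrow> (real \<Rightarrow> 'a measure)
                        \<Rightarrow> real \<Rightarrow> nat \<Rightarrow> (nat \<Rightarrow> 'a \<times> bool) \<Rightarrow> ennreal" where
  "kac_total_rate B \<rho> r k f = (\<Sum>i<k. kac_rate B \<rho> r (fst (f i)))"

definition exp_neg :: "ennreal \<Rightarrow> ennreal" where
  "exp_neg L = (if L = \<infinity> then 0 else ennreal (exp (- enn2real L)))"

text \<open>The transition operator of the jump chain, applied to a nonnegative test function g:
  the next branching time u > t has density Q(u) exp(-\<integral>_t^u Q), and at time u the
  event (particle i, environment velocity w, direction \<sigma>) occurs with intensity
  2 \<rho>_u(dw) B(v_i - w, d\<sigma>); with probability exp(-\<integral>_t^\<infinity> Q) no further event occurs.\<close>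
definition kac_step :: "('a::euclidean_space \<Rightarrow> 'a measure) \<Rightarrow> (real \<Rightarrow> 'a measure)
                        \<Rightarrow> ('a kstate \<Rightarrow> ennreal) \<Rightarrow> 'a kstate \<Rightarrow> ennreal" where
  "kac_step B \<rho> g st =
     (case st of (\<tau>, k, f) \<Rightarrow>
       (case \<tau> of
          ereal t \<Rightarrow>
            (\<integral>\<^sup>+ u \<in> {t<..}.
                exp_neg (\<integral>\<^sup>+ r \<in> {t..u}. kac_total_rate B \<rho> r k f \<partial>lborel) *
                (\<Sum>i<k. \<integral>\<^sup>+ w. \<integral>\<^sup>+ \<sigma>. 2 * g (ereal u, Suc (Suc k), branch f k i w \<sigma>)
                                      \<partial>B (fst (f i) - w) \<partial>\<rho> u) \<partial>lborel)
            + exp_neg (\<integral>\<^sup>+ r \<in> {t..}. kac_total_rate B \<rho> r k f \<partial>lborel) * g (\<infinity>, k, f)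
        | _ \<Rightarrow> g st))"

definition kac_history :: "'w measure \<Rightarrow> (nat \<Rightarrow> 'w \<Rightarrow> 'a::euclidean_space kstate) \<Rightarrow> nat
                           \<Rightarrow> 'w set set" where
  "kac_history M X n =
     sigma_sets (space M) (\<Union>i\<le>n. {X i -` A \<inter> space M | A. A \<in> sets kstate_space})"

text \<open>(M, X) is a realization of the jump chain of the linearized Kac process in
  environment \<rho> started at time s from one particle of type (v0, +1): X n is the state
  right after the n-th branching event, and X is Markov (w.r.t. its natural filtration)
  with transition operator kac_step.\<close>
definition lin_kac_process :: "('a::euclidean_space \<Rightarrow> 'a measure) \<Rightarrow> (real \<Rightarrow> 'a measure)
      \<Rightarrow> real \<Rightarrow> 'a \<Rightarrow> 'w measure \<Rightarrow> (nat \<Rightarrow> 'w \<Rightarrow> 'a kstate) \<Rightarrow> bool" where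
  "lin_kac_process B \<rho> s v0 M X \<longleftrightarrow>
     prob_space M \<and>
     (\<forall>n. X n \<in> measurable M kstate_space) \<and>
     (\<forall>\<omega> \<in> space M. X 0 \<omega> = (ereal s, 1, \<lambda>_. (v0, True))) \<and>
     (\<forall>n g A. g \<in> borel_measurable kstate_space \<longrightarrow> A \<in> kac_history M X n \<longrightarrow>
        (\<integral>\<^sup>+ \<omega> \<in> A. g (X (Suc n) \<omega>) \<partial>M) = (\<integral>\<^sup>+ \<omega> \<in> A. kac_step B \<rho> g (X n \<omega>) \<partial>M))"

text \<open>The pairing of a test function h with the empirical measure \<Lambda>_t of velocities of
  the particles alive at time t (zero on explosion paths, a null set).\<close>
definition kac_pairing :: "(nat \<Rightarrow> 'w \<Rightarrow> 'a kstate) \<Rightarrow> ('a \<Rightarrow> real) \<Rightarrow> real \<Rightarrow> 'w \<Rightarrow> ennreal" where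
  "kac_pairing X h t \<omega> =
     (\<Sum>n. if fst (X n \<omega>) \<le> ereal t \<and> ereal t < fst (X (Suc n) \<omega>)
          then (\<Sum>i < fst (snd (X n \<omega>)). ennreal (h (fst (snd (snd (X n \<omega>)) i))))
          else 0)"

definition kac_moment_bound :: "('a::euclidean_space \<Rightarrow> 'a measure) \<Rightarrow> (real \<Rightarrow> 'a measure)
      \<Rightarrow> real \<Rightarrow> 'a \<Rightarrow> 'w measure \<Rightarrow> (nat \<Rightarrow> 'w \<Rightarrow> 'a kstate) \<Rightarrow> real \<Rightarrow> real \<Rightarrow> real \<Rightarrow> bool"
  where
  "kac_moment_bound B \<rho> s v0 M X p c t \<longleftrightarrow>
     (let I = (\<integral>\<^sup>+ r \<in> {s..t}. (\<integral>\<^sup>+ v. ennreal (1 + norm v powr (p + 1)) \<partial>\<rho> r) \<partial>lborel) in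
      I < \<infinity> \<longrightarrow>
      (\<integral>\<^sup>+ \<omega>. kac_pairing X (\<lambda>v. 1 + norm v powr p) t \<omega> \<partial>M)
        \<le> ennreal ((1 + norm v0 powr p) * exp (c * enn2real I)))"

end

theory Submission
  imports Defs
begin

(* Both claims are obtained from one Lyapunov-function argument:
   for h(\<tau>,k,f) = \<langle>W_p, \<Lambda>\<rangle> exp(c (I(t) - I(\<tau>))), with W_p(v) = 1 + |v|^p and
   I(u) = \<integral>_s^u \<langle>1 + |w|^(p+1), \<rho>_r\<rangle> dr, one shows the one-step supersolution inequality
   \<phi>(y) (K g)(y) + (K h)(y) \<le> h(y) for the transition operator K of the chain, and telescopes it
   along the chain using the Markov property (lyapunov_telescoping). *)

section \<open>Lower integrals of non-measurable functions\<close>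

text \<open>The transition operator of the jump chain is not known to be measurable, so the
  Markov property has to be used with the following two inequalities, which hold for
  arbitrary nonnegative functions because the lower integral is a supremum over simple
  functions.\<close>

lemma nn_integral_superadd:
  "integral\<^sup>N M f + integral\<^sup>N M g \<le> (\<integral>\<^sup>+ x. f x + g x \<partial>M)"
proof -
  let ?A = "{s. simple_function M s \<and> s \<le> f}"
  let ?B = "{s. simple_function M s \<and> s \<le> g}"
  have "(\<lambda>_. 0) \<in> ?A" "(\<lambda>_. 0) \<in> ?B" by (auto simp: le_fun_def)
  then have ne: "?A \<noteq> {}" "?B \<noteq> {}" by blast+
  have "integral\<^sup>N M f + integral\<^sup>N M g = (SUP s\<in>?A. integral\<^sup>S M s + (SUP s'\<in>?B. integral\<^sup>S M s'))"
    unfolding nn_integral_def using ne by (simp add: ennreal_SUP_add_left)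
  also have "\<dots> = (SUP s\<in>?A. SUP s'\<in>?B. integral\<^sup>S M s + integral\<^sup>S M s')"
    using ne by (simp add: ennreal_SUP_add_right)
  also have "\<dots> \<le> (\<integral>\<^sup>+ x. f x + g x \<partial>M)"
  proof (intro SUP_least)
    fix s s' assume s: "s \<in> ?A" and s': "s' \<in> ?B"
    have "integral\<^sup>S M s + integral\<^sup>S M s' = integral\<^sup>S M (\<lambda>x. s x + s' x)"
      using s s' by (simp add: simple_integral_add)
    also have "\<dots> \<le> (\<integral>\<^sup>+ x. f x + g x \<partial>M)"
      unfolding nn_integral_def
      by (rule SUP_upper) (use s s' in \<open>auto simp: le_fun_def intro: add_mono\<close>)
    finally show "integral\<^sup>S M s + integral\<^sup>S M s' \<le> (\<integral>\<^sup>+ x. f x + g x \<partial>M)" .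
  qed
  finally show ?thesis .
qed

lemma nn_integral_cmult_le:
  "c * integral\<^sup>N M f \<le> (\<integral>\<^sup>+ x. c * f x \<partial>M)"
proof -
  let ?A = "{s. simple_function M s \<and> s \<le> f}"
  have "c * integral\<^sup>N M f = (SUP s\<in>?A. c * integral\<^sup>S M s)"
    unfolding nn_integral_def by (simp add: SUP_mult_left_ennreal)
  also have "\<dots> \<le> (\<integral>\<^sup>+ x. c * f x \<partial>M)"
  proof (intro SUP_least)
    fix s assume s: "s \<in> ?A"
    have "c * integral\<^sup>S M s = integral\<^sup>S M (\<lambda>x. c * s x)"
      using s by (simp add: simple_integral_mult)
    also have "\<dots> \<le> (\<integral>\<^sup>+ x. c * f x \<partial>M)"
      unfolding nn_integral_def
      by (rule SUP_upper) (use s in \<open>auto simp: le_fun_def intro: mult_left_mono\<close>)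
    finally show "c * integral\<^sup>S M s \<le> (\<integral>\<^sup>+ x. c * f x \<partial>M)" .
  qed
  finally show ?thesis .
qed

section \<open>The survival inequality\<close>

text \<open>For a nonnegative rate g on an initial segment D of (a,\<infinity>) with cumulative rate
  G(u) = \<integral>_(a,u] g, the density g e^-G of the first event time and the survival probability
  e^-\<integral>_D g have total mass at most one. For finite continuous rates this is the chain rule;
  for general measurable (possibly infinite) rates we use the layer-cake formula
  e^-x = \<integral>_{z > x} e^-z dz and Fubini, which reduce it to a bound on level sets of G.\<close>

lemma exp_neg_ennreal: "0 \<le> x \<Longrightarrow> exp_neg (ennreal x) = ennreal (exp (- x))"
  by (simp add: exp_neg_def)

lemma exp_neg_add: "exp_neg (a + b) = exp_neg a * exp_neg b"
proof (cases "a = top \<or> b = top")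
  case True then show ?thesis by (auto simp: exp_neg_def)
next
  case False
  then obtain x y where "a = ennreal x" "0 \<le> x" "b = ennreal y" "0 \<le> y"
    by (metis enn2real_nonneg ennreal_enn2real top.not_eq_extremum)
  then show ?thesis
    by (simp add: exp_neg_ennreal ennreal_plus[symmetric] ennreal_mult[symmetric] exp_add[symmetric]
             del: ennreal_plus)
qed

lemma exp_neg_measurable [measurable]: "exp_neg \<in> borel_measurable borel"
  unfolding exp_neg_def by measurable

lemma nn_integral_exp_neg_Ioi:
  "(\<integral>\<^sup>+ z. ennreal (exp (-z)) * indicator {x<..} z \<partial>lborel) = ennreal (exp (-x))"
proof -
  have lim: "((\<lambda>z::real. - exp (-z)) \<longlongrightarrow> 0) at_top"
    using tendsto_minus[OF tendsto_power_div_exp_0[of 0]] by (simp add: exp_minus inverse_eq_divide)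
  have "(\<integral>\<^sup>+ z. ennreal (exp (-z)) * indicator {x<..} z \<partial>lborel)
      = (\<integral>\<^sup>+ z. ennreal (exp (-z)) * indicator {x..} z \<partial>lborel)"
    by (intro nn_integral_cong_AE)
       (use AE_lborel_singleton[of x] in \<open>eventually_elim, auto simp: indicator_def\<close>)
  also have "\<dots> = ennreal (0 - (- exp (-x)))"
    by (rule nn_integral_FTC_atLeast[where F="\<lambda>z. - exp (-z)"])
       (auto intro!: derivative_eq_intros simp: lim)
  finally show ?thesis by simp
qed

lemma exp_neg_layer_cake:
  "exp_neg x = (\<integral>\<^sup>+ z. ennreal (exp (-z)) * indicator {z. x < ennreal z} z \<partial>lborel)"
proof (cases x)
  case (real y)
  then have "{z. x < ennreal z} = {y<..}" by (auto simp: ennreal_less_iff)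
  then show ?thesis using real by (simp add: nn_integral_exp_neg_Ioi exp_neg_def)
qed (simp add: exp_neg_def)

text \<open>The identity \<integral>_0^\<infinity> e^-z min(z,T) dz + e^-T = 1 for T \<in> [0,\<infinity>], which closes the
  layer-cake argument once the level sets have been bounded by min(z,T).\<close>
lemma exp_neg_min_identity:
  "(\<integral>\<^sup>+ z. ennreal (exp (-z)) * min (ennreal z) T * indicator {0<..} z \<partial>lborel) + exp_neg T = 1"
proof -
  define F where "F z = - ((1 + z) * exp (-z))" for z :: real
  have F_deriv: "(F has_real_derivative z * exp (-z)) (at z)" for z
    unfolding F_def by (auto intro!: derivative_eq_intros simp: algebra_simps)
  show ?thesis
  proof (cases T)
    case top
    have lim: "(F \<longlongrightarrow> 0) at_top"
    proof -
      have "((\<lambda>z::real. -(z ^ 0 / exp z + z ^ 1 / exp z)) \<longlongrightarrow> -(0 + 0)) at_top"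
        by (intro tendsto_intros tendsto_power_div_exp_0)
      then show ?thesis unfolding F_def by (simp add: exp_minus field_simps)
    qed
    have "(\<integral>\<^sup>+ z. ennreal (exp (-z)) * min (ennreal z) T * indicator {0<..} z \<partial>lborel)
       = (\<integral>\<^sup>+ z. ennreal (z * exp (-z)) * indicator {0..} z \<partial>lborel)"
      using AE_lborel_singleton[of 0]
      by (intro nn_integral_cong_AE) (eventually_elim, auto simp: top indicator_def ennreal_mult' mult.commute)
    also have "\<dots> = ennreal (0 - F 0)"
      by (rule nn_integral_FTC_atLeast[where F=F]) (use F_deriv lim in auto)
    finally show ?thesis by (simp add: top exp_neg_def F_def)
  next
    case (real t)
    have "(\<integral>\<^sup>+ z. ennreal (exp (-z)) * min (ennreal z) T * indicator {0<..} z \<partial>lborel)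
       = (\<integral>\<^sup>+ z. ennreal (z * exp (-z)) * indicator {0..t} z
                  + ennreal t * (ennreal (exp (-z)) * indicator {t<..} z) \<partial>lborel)"
      using AE_lborel_singleton[of 0]
    proof (intro nn_integral_cong_AE, eventually_elim)
      fix z :: real assume "z \<noteq> 0"
      then consider "z < 0" | "0 < z" "z \<le> t" | "0 < z" "t < z" by linarith
      then show "ennreal (exp (-z)) * min (ennreal z) T * indicator {0<..} z
        = ennreal (z * exp (-z)) * indicator {0..t} z + ennreal t * (ennreal (exp (-z)) * indicator {t<..} z)"
        by cases (use real in \<open>auto simp: indicator_def min_def ennreal_mult mult.commute\<close>)
    qed
    also have "\<dots> = (\<integral>\<^sup>+ z. ennreal (z * exp (-z)) * indicator {0..t} z \<partial>lborel)
                    + ennreal t * ennreal (exp (-t))"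
      by (subst nn_integral_add) (auto simp: nn_integral_cmult nn_integral_exp_neg_Ioi)
    also have "(\<integral>\<^sup>+ z. ennreal (z * exp (-z)) * indicator {0..t} z \<partial>lborel) = ennreal (F t - F 0)"
      by (rule nn_integral_FTC_Icc[where F=F]) (use real F_deriv in auto)
    finally have eq: "(\<integral>\<^sup>+ z. ennreal (exp (-z)) * min (ennreal z) T * indicator {0<..} z \<partial>lborel)
        = ennreal (F t - F 0) + ennreal (t * exp (-t))"
      using real by (simp add: ennreal_mult)
    have "(1 + t) * exp (-t) \<le> exp t * exp (-t)"
      by (intro mult_right_mono exp_ge_add_one_self) auto
    then have F_le: "0 \<le> F t - F 0" by (simp add: F_def exp_minus)
    have "F t - F 0 + t * exp (-t) + exp (-t) = 1" by (simp add: F_def algebra_simps)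
    then show ?thesis
      using eq F_le real by (simp add: exp_neg_def ennreal_plus[symmetric] del: ennreal_plus)
  qed
qed

lemma emeasure_Union_chain_le:
  assumes countable: "countable F" and chain: "Complete_Partial_Order.chain (\<subseteq>) F"
    and sets: "F \<subseteq> sets M" and bound: "\<And>A. A \<in> F \<Longrightarrow> emeasure M A \<le> z"
  shows "emeasure M (\<Union>F) \<le> z"
proof (cases "F = {}")
  case False
  define A where "A = from_nat_into F"
  have A: "A n \<in> F" for n unfolding A_def using False by (rule from_nat_into)
  have F_eq: "F = range A" unfolding A_def using range_from_nat_into[OF False countable] by simp
  have dominated: "\<exists>j. (\<Union>i\<le>n. A i) \<subseteq> A j" for n
  proof (induction n)
    case (Suc n)
    then obtain j where j: "(\<Union>i\<le>n. A i) \<subseteq> A j" by blast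
    have "A j \<subseteq> A (Suc n) \<or> A (Suc n) \<subseteq> A j" using chain A by (simp add: chain_def)
    then show ?case using j by (auto simp: atMost_Suc)
  qed auto
  have "\<Union>F = (\<Union>n. \<Union>i\<le>n. A i)" unfolding F_eq by auto
  also have "emeasure M \<dots> = (SUP n. emeasure M (\<Union>i\<le>n. A i))"
    by (rule SUP_emeasure_incseq[symmetric]) (use A sets in \<open>force simp: incseq_def\<close>)+
  also have "\<dots> \<le> z"
  proof (rule SUP_least)
    fix n
    obtain j where "(\<Union>i\<le>n. A i) \<subseteq> A j" using dominated by blast
    then have "emeasure M (\<Union>i\<le>n. A i) \<le> emeasure M (A j)"
      using A sets by (intro emeasure_mono) auto
    then show "emeasure M (\<Union>i\<le>n. A i) \<le> z" using bound[OF A] by (rule order_trans)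
  qed
  finally show ?thesis .
qed simp

lemma cumulative_integral_measurable [measurable]:
  fixes g :: "real \<Rightarrow> ennreal"
  assumes [measurable]: "g \<in> borel_measurable borel"
  shows "(\<lambda>u. \<integral>\<^sup>+ r. g r * indicator {a<..u} r \<partial>lborel) \<in> borel_measurable borel"
    and "(\<lambda>u. \<integral>\<^sup>+ r. g r * indicator {a..u} r \<partial>lborel) \<in> borel_measurable borel"
  by (simp_all only: indicator_def greaterThanAtMost_iff atLeastAtMost_iff) measurable

text \<open>This set is an initial segment of D; up to its largest element (a null set) it is the
  union of the chain of intervals (a,q] with rational q in it, each of g-mass G q < z.\<close>
lemma level_set_integral_le:
  fixes g :: "real \<Rightarrow> ennreal" and a z :: real
  assumes g [measurable]: "g \<in> borel_measurable borel"
    and D: "D \<subseteq> {a<..}" "\<And>u. u \<in> D \<Longrightarrow> {a<..u} \<subseteq> D"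
  defines "G \<equiv> \<lambda>u. \<integral>\<^sup>+ r. g r * indicator {a<..u} r \<partial>lborel"
  shows "(\<integral>\<^sup>+ u. g u * indicator D u * indicator {u. G u < ennreal z} u \<partial>lborel) \<le> ennreal z"
proof -
  define S where "S = {u\<in>D. G u < ennreal z}"
  define N where "N = density lborel g"
  define I where "I = (\<lambda>q. {a<..q}) ` (\<rat> \<inter> S)"
  have "countable I" unfolding I_def using countable_rat by (blast intro: countable_subset)
  have G_mono: "G q \<le> G u" if "q \<le> u" for q u
    unfolding G_def using that by (intro nn_integral_mono) (auto simp: indicator_def)
  have sets_N: "sets N = sets borel" unfolding N_def by simp
  have G_eq: "G q = emeasure N {a<..q}" for q
    unfolding G_def N_def by (simp add: emeasure_density)
  have below_rational: "u \<in> \<Union>I" if u: "u \<in> S" and v: "v \<in> S" "u < v" for u v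
  proof -
    obtain q where q: "q \<in> \<rat>" "u < q" "q < v" using Rats_dense_in_real[OF v(2)] by blast
    have "a < u" using u D unfolding S_def by auto
    then have "q \<in> D" using D(2)[of v] v q unfolding S_def by auto
    moreover have "G q < ennreal z" using G_mono[of q v] v q unfolding S_def by auto
    ultimately show ?thesis
      using q \<open>a < u\<close> unfolding I_def S_def by (intro UnionI[OF imageI[of q]]) auto
  qed
  define Top where "Top = {u\<in>S. \<forall>v\<in>S. v \<le> u}"
  have covered: "u \<in> \<Union>I" if "u \<in> S" "u \<notin> Top" for u
    using that below_rational unfolding Top_def by (auto simp: not_le)
  have "finite Top"
  proof (rule finite_subset)
    show "Top \<subseteq> {SOME u. u \<in> Top}"
      unfolding Top_def by (auto intro: antisym someI2[where Q="\<lambda>x. _ = x"])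
  qed simp
  then have "AE u in lborel. u \<notin> Top"
    by (intro AE_not_in countable_imp_null_set_lborel countable_finite)
  then have "AE u in lborel. g u * indicator D u * indicator {u. G u < ennreal z} u \<le> g u * indicator (\<Union>I) u"
    by eventually_elim (use covered in \<open>auto simp: indicator_def S_def\<close>)
  then have "(\<integral>\<^sup>+ u. g u * indicator D u * indicator {u. G u < ennreal z} u \<partial>lborel)
      \<le> (\<integral>\<^sup>+ u. g u * indicator (\<Union>I) u \<partial>lborel)"
    by (rule nn_integral_mono_AE)
  also have "\<dots> = emeasure N (\<Union>I)"
    unfolding N_def using \<open>countable I\<close> by (subst emeasure_density) (auto simp: I_def)
  also have "\<dots> \<le> ennreal z"
  proof (rule emeasure_Union_chain_le)
    show "Complete_Partial_Order.chain (\<subseteq>) I"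
      unfolding I_def by (rule chainI) (auto simp: linorder_class.le_cases)
  qed (use \<open>countable I\<close> in \<open>auto simp: I_def S_def G_eq[symmetric] sets_N\<close>)
  finally show ?thesis .
qed

lemma survival_inequality:
  fixes g :: "real \<Rightarrow> ennreal" and a :: real and D :: "real set"
  assumes g [measurable]: "g \<in> borel_measurable borel"
    and [measurable]: "D \<in> sets borel" and D: "D \<subseteq> {a<..}" "\<And>u. u \<in> D \<Longrightarrow> {a<..u} \<subseteq> D"
  shows "(\<integral>\<^sup>+ u. g u * exp_neg (\<integral>\<^sup>+ r. g r * indicator {a<..u} r \<partial>lborel) * indicator D u \<partial>lborel)
          + exp_neg (\<integral>\<^sup>+ u. g u * indicator D u \<partial>lborel) \<le> 1"
proof -
  define G where "G u = (\<integral>\<^sup>+ r. g r * indicator {a<..u} r \<partial>lborel)" for u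
  define T where "T = (\<integral>\<^sup>+ u. g u * indicator D u \<partial>lborel)"
  have [measurable]: "G \<in> borel_measurable borel" unfolding G_def by measurable
  have level_le: "(\<integral>\<^sup>+ u. g u * indicator D u * indicator {u. G u < ennreal z} u \<partial>lborel) \<le> min (ennreal z) T"
    for z
  proof -
    have "(\<integral>\<^sup>+ u. g u * indicator D u * indicator {u. G u < ennreal z} u \<partial>lborel) \<le> T"
      unfolding T_def by (intro nn_integral_mono) (auto simp: indicator_def)
    then show ?thesis using level_set_integral_le[OF g D] by (simp add: G_def)
  qed
  have "(\<integral>\<^sup>+ u. g u * exp_neg (G u) * indicator D u \<partial>lborel)
     = (\<integral>\<^sup>+ u. \<integral>\<^sup>+ z. (g u * indicator D u) * (ennreal (exp (-z)) * indicator {z. G u < ennreal z} z) \<partial>lborel \<partial>lborel)"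
    by (intro nn_integral_cong) (simp add: exp_neg_layer_cake[of "G _"] nn_integral_cmult mult_ac)
  also have "\<dots> = (\<integral>\<^sup>+ z. \<integral>\<^sup>+ u. (g u * indicator D u) * (ennreal (exp (-z)) * indicator {z. G u < ennreal z} z) \<partial>lborel \<partial>lborel)"
    by (rule lborel_pair.Fubini'[symmetric]) measurable
  also have "\<dots> = (\<integral>\<^sup>+ z. ennreal (exp (-z)) * (\<integral>\<^sup>+ u. g u * indicator D u * indicator {u. G u < ennreal z} u \<partial>lborel) \<partial>lborel)"
    by (intro nn_integral_cong) (simp add: nn_integral_cmult[symmetric] mult_ac indicator_def)
  also have "\<dots> \<le> (\<integral>\<^sup>+ z. ennreal (exp (-z)) * min (ennreal z) T * indicator {0<..} z \<partial>lborel)"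
  proof (intro nn_integral_mono)
    fix z :: real
    show "ennreal (exp (-z)) * (\<integral>\<^sup>+ u. g u * indicator D u * indicator {u. G u < ennreal z} u \<partial>lborel)
          \<le> ennreal (exp (-z)) * min (ennreal z) T * indicator {0<..} z"
      using level_le[of z] by (cases "0 < z") (auto simp: mult_left_mono ennreal_neg not_less)
  qed
  finally have "(\<integral>\<^sup>+ u. g u * exp_neg (G u) * indicator D u \<partial>lborel) + exp_neg T
      \<le> (\<integral>\<^sup>+ z. ennreal (exp (-z)) * min (ennreal z) T * indicator {0<..} z \<partial>lborel) + exp_neg T"
    by (rule add_right_mono)
  also have "\<dots> = 1" by (rule exp_neg_min_identity)
  finally show ?thesis unfolding G_def T_def .
qed

lemma nn_integral_Icc_eq_Ioc:
  fixes a u :: real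
  shows "(\<integral>\<^sup>+ r. g r * indicator {a..u} r \<partial>lborel) = (\<integral>\<^sup>+ r. g r * indicator {a<..u} r \<partial>lborel)"
  by (intro nn_integral_cong_AE)
     (use AE_lborel_singleton[of a] in \<open>eventually_elim, auto simp: indicator_def\<close>)

lemma nn_integral_interval_split:
  fixes g :: "real \<Rightarrow> ennreal"
  assumes [measurable]: "g \<in> borel_measurable borel" and "a \<le> b"
  shows "c \<ge> b \<Longrightarrow> (\<integral>\<^sup>+ r. g r * indicator {a..c} r \<partial>lborel)
           = (\<integral>\<^sup>+ r. g r * indicator {a..b} r \<partial>lborel) + (\<integral>\<^sup>+ r. g r * indicator {b<..c} r \<partial>lborel)"
    and "(\<integral>\<^sup>+ r. g r * indicator {a..} r \<partial>lborel)
           = (\<integral>\<^sup>+ r. g r * indicator {a..b} r \<partial>lborel) + (\<integral>\<^sup>+ r. g r * indicator {b<..} r \<partial>lborel)"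
  using \<open>a \<le> b\<close> by (subst nn_integral_add[symmetric]; auto intro!: nn_integral_cong simp: indicator_def)+

text \<open>Rates are only controlled (and measurable) on nonnegative times; integrals over sets of
  nonnegative times may be computed with the rate truncated to {0..}.\<close>
lemma nn_integral_restrict_nonneg:
  fixes S :: "real set"
  assumes "\<And>r. r \<in> S \<Longrightarrow> 0 \<le> r"
  shows "(\<integral>\<^sup>+ r. g r * indicator S r \<partial>lborel) = (\<integral>\<^sup>+ r. (indicator {0..} r * g r) * indicator S r \<partial>lborel)"
  using assms by (intro nn_integral_cong) (auto simp: indicator_def)

text \<open>The first: the probability that the next event after time \<tau> happens
  after t (or never) is at most the probability of surviving up to t.\<close>
lemma survival_tail_bound:
  fixes Q :: "real \<Rightarrow> ennreal"
  assumes Q [measurable]: "(\<lambda>r. indicator {0..} r * Q r) \<in> borel_measurable borel"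
    and \<tau>0: "0 \<le> \<tau>" and \<tau>t: "\<tau> \<le> t"
  shows "(\<integral>\<^sup>+ u. exp_neg (\<integral>\<^sup>+ r. Q r * indicator {\<tau>..u} r \<partial>lborel) * Q u * indicator {t<..} u \<partial>lborel)
         + exp_neg (\<integral>\<^sup>+ r. Q r * indicator {\<tau>..} r \<partial>lborel)
       \<le> exp_neg (\<integral>\<^sup>+ r. Q r * indicator {\<tau>..t} r \<partial>lborel)"
proof -
  define Q' where "Q' r = indicator {0..} r * Q r" for r
  have [measurable]: "Q' \<in> borel_measurable borel" unfolding Q'_def by (rule Q)
  define F where "F u = (\<integral>\<^sup>+ r. Q r * indicator {\<tau>..u} r \<partial>lborel)" for u
  define H where "H u = (\<integral>\<^sup>+ r. Q' r * indicator {t<..u} r \<partial>lborel)" for u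
  define T where "T = (\<integral>\<^sup>+ r. Q' r * indicator {t<..} r \<partial>lborel)"
  have restrict: "(\<integral>\<^sup>+ r. Q r * indicator S r \<partial>lborel) = (\<integral>\<^sup>+ r. Q' r * indicator S r \<partial>lborel)"
    if "S \<subseteq> {\<tau>..}" for S
    unfolding Q'_def using that \<tau>0 by (intro nn_integral_restrict_nonneg) auto
  have F_split: "F u = F t + H u" if "t \<le> u" for u
    unfolding F_def H_def using that \<tau>t
    by (simp add: restrict nn_integral_interval_split(1)[of Q' \<tau> t u])
  have T_split: "(\<integral>\<^sup>+ r. Q r * indicator {\<tau>..} r \<partial>lborel) = F t + T"
    unfolding F_def T_def using \<tau>t by (simp add: restrict nn_integral_interval_split(2)[of Q' \<tau> t])
  have "(\<integral>\<^sup>+ u. exp_neg (F u) * Q u * indicator {t<..} u \<partial>lborel)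
      = (\<integral>\<^sup>+ u. exp_neg (F t) * (Q' u * exp_neg (H u) * indicator {t<..} u) \<partial>lborel)"
  proof (intro nn_integral_cong)
    fix u
    show "exp_neg (F u) * Q u * indicator {t<..} u = exp_neg (F t) * (Q' u * exp_neg (H u) * indicator {t<..} u)"
    proof (cases "t < u")
      case True
      then have "0 \<le> u" using \<tau>0 \<tau>t by simp
      then show ?thesis using True F_split[of u] by (simp add: Q'_def exp_neg_add mult_ac)
    qed simp
  qed
  also have "\<dots> = exp_neg (F t) * (\<integral>\<^sup>+ u. Q' u * exp_neg (H u) * indicator {t<..} u \<partial>lborel)"
    unfolding H_def by (rule nn_integral_cmult) measurable
  finally have "(\<integral>\<^sup>+ u. exp_neg (F u) * Q u * indicator {t<..} u \<partial>lborel)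
        + exp_neg (\<integral>\<^sup>+ r. Q r * indicator {\<tau>..} r \<partial>lborel)
      = exp_neg (F t) * ((\<integral>\<^sup>+ u. Q' u * exp_neg (H u) * indicator {t<..} u \<partial>lborel) + exp_neg T)"
    unfolding T_split by (simp add: exp_neg_add distrib_left)
  also have "\<dots> \<le> exp_neg (F t) * 1"
    unfolding H_def T_def by (intro mult_left_mono survival_inequality) auto
  finally show ?thesis unfolding F_def by simp
qed

lemma cumulative_integral_split:
  fixes m :: "real \<Rightarrow> ennreal"
  assumes m [measurable]: "(\<lambda>r. indicator {0..} r * m r) \<in> borel_measurable borel"
    and s0: "0 \<le> s" and s\<tau>: "s \<le> \<tau>" and u: "\<tau> \<le> u" "u \<le> t"
    and fin: "(\<integral>\<^sup>+ r. m r * indicator {s..t} r \<partial>lborel) < \<infinity>"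
  defines "X \<equiv> \<integral>\<^sup>+ r. indicator {0..} r * m r * indicator {\<tau><..u} r \<partial>lborel"
  shows "X < \<infinity>"
    and "enn2real (\<integral>\<^sup>+ r. m r * indicator {s..u} r \<partial>lborel)
           = enn2real (\<integral>\<^sup>+ r. m r * indicator {s..\<tau>} r \<partial>lborel) + enn2real X"
proof -
  define m' where "m' r = indicator {0..} r * m r" for r
  have [measurable]: "m' \<in> borel_measurable borel" unfolding m'_def by (rule m)
  have restrict: "(\<integral>\<^sup>+ r. m r * indicator S r \<partial>lborel) = (\<integral>\<^sup>+ r. m' r * indicator S r \<partial>lborel)"
    if "S \<subseteq> {s..}" for S
    unfolding m'_def using that s0 by (intro nn_integral_restrict_nonneg) auto
  have split: "(\<integral>\<^sup>+ r. m r * indicator {s..u} r \<partial>lborel) = (\<integral>\<^sup>+ r. m r * indicator {s..\<tau>} r \<partial>lborel) + X"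
    unfolding X_def m'_def[symmetric] using s\<tau> u
    by (simp add: restrict nn_integral_interval_split(1)[of m' s \<tau> u])
  have "(\<integral>\<^sup>+ r. m r * indicator {s..u} r \<partial>lborel) \<le> (\<integral>\<^sup>+ r. m r * indicator {s..t} r \<partial>lborel)"
    using u by (intro nn_integral_mono) (auto simp: indicator_def)
  then have "(\<integral>\<^sup>+ r. m r * indicator {s..\<tau>} r \<partial>lborel) + X < \<infinity>"
    using split fin by (metis le_less_trans)
  then show "X < \<infinity>"
    and "enn2real (\<integral>\<^sup>+ r. m r * indicator {s..u} r \<partial>lborel)
           = enn2real (\<integral>\<^sup>+ r. m r * indicator {s..\<tau>} r \<partial>lborel) + enn2real X"
    unfolding split by (auto simp: enn2real_plus)
qed

text \<open>Let m be a second nonnegative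
  rate (the environment moment) with cumulative integral I(u) = \<integral>_[s,u] m finite on [s,t].
  Discounting by exp(c (I(t) - I(u))) turns the survival factor of Q into a survival factor for
  the augmented rate Q + c m (discounted_survival_factor); the survival inequality for the
  augmented rate then bounds the discounted expected weight (discounted_survival_bound).\<close>
lemma discounted_survival_factor:
  fixes Q m :: "real \<Rightarrow> ennreal"
  assumes Q [measurable]: "(\<lambda>r. indicator {0..} r * Q r) \<in> borel_measurable borel"
    and m [measurable]: "(\<lambda>r. indicator {0..} r * m r) \<in> borel_measurable borel"
    and s0: "0 \<le> s" and s\<tau>: "s \<le> \<tau>" and u: "\<tau> \<le> u" "u \<le> t"
    and fin: "(\<integral>\<^sup>+ r. m r * indicator {s..t} r \<partial>lborel) < \<infinity>" and c0: "0 \<le> c"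
  defines "I \<equiv> \<lambda>u. enn2real (\<integral>\<^sup>+ r. m r * indicator {s..u} r \<partial>lborel)"
  shows "exp_neg (\<integral>\<^sup>+ r. Q r * indicator {\<tau>..u} r \<partial>lborel) * ennreal (exp (c * (I t - I u)))
       = ennreal (exp (c * (I t - I \<tau>)))
         * exp_neg (\<integral>\<^sup>+ r. (indicator {0..} r * Q r + ennreal c * (indicator {0..} r * m r))
                               * indicator {\<tau><..u} r \<partial>lborel)"
proof -
  define X where "X = (\<integral>\<^sup>+ r. indicator {0..} r * m r * indicator {\<tau><..u} r \<partial>lborel)"
  note X_fin = cumulative_integral_split(1)[OF m s0 s\<tau> u fin, folded X_def]
  have I_u: "I u = I \<tau> + enn2real X"
    unfolding I_def X_def by (rule cumulative_integral_split(2)[OF m s0 s\<tau> u fin])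
  have augmented: "(\<integral>\<^sup>+ r. (indicator {0..} r * Q r + ennreal c * (indicator {0..} r * m r))
                               * indicator {\<tau><..u} r \<partial>lborel)
      = (\<integral>\<^sup>+ r. Q r * indicator {\<tau>..u} r \<partial>lborel) + ennreal c * X"
  proof -
    have "(\<integral>\<^sup>+ r. (indicator {0..} r * Q r + ennreal c * (indicator {0..} r * m r)) * indicator {\<tau><..u} r \<partial>lborel)
        = (\<integral>\<^sup>+ r. indicator {0..} r * Q r * indicator {\<tau><..u} r
                 + ennreal c * (indicator {0..} r * m r * indicator {\<tau><..u} r) \<partial>lborel)"
      by (intro nn_integral_cong) (simp add: algebra_simps)
    also have "\<dots> = (\<integral>\<^sup>+ r. indicator {0..} r * Q r * indicator {\<tau><..u} r \<partial>lborel) + ennreal c * X"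
      unfolding X_def by (simp add: nn_integral_add nn_integral_cmult)
    also have "(\<integral>\<^sup>+ r. indicator {0..} r * Q r * indicator {\<tau><..u} r \<partial>lborel) = (\<integral>\<^sup>+ r. Q r * indicator {\<tau><..u} r \<partial>lborel)"
      using s0 s\<tau> by (intro nn_integral_restrict_nonneg[symmetric]) auto
    also have "\<dots> = (\<integral>\<^sup>+ r. Q r * indicator {\<tau>..u} r \<partial>lborel)"
      by (rule nn_integral_Icc_eq_Ioc[symmetric])
    finally show ?thesis .
  qed
  have "ennreal c * X = ennreal (c * enn2real X)"
    using X_fin c0 by (simp add: ennreal_mult less_top)
  then have "ennreal (exp (c * (I t - I \<tau>))) * exp_neg (ennreal c * X)
      = ennreal (exp (c * (I t - I \<tau>))) * ennreal (exp (- (c * enn2real X)))"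
    using c0 by (simp add: exp_neg_ennreal)
  also have "\<dots> = ennreal (exp (c * (I t - I u)))"
    unfolding I_u by (simp add: ennreal_mult[symmetric] exp_add[symmetric] algebra_simps)
  finally have discount: "ennreal (exp (c * (I t - I \<tau>))) * exp_neg (ennreal c * X)
      = ennreal (exp (c * (I t - I u)))" .
  show ?thesis
    unfolding augmented exp_neg_add discount[symmetric] by (simp only: ac_simps)
qed

lemma discounted_survival_bound:
  fixes Q m :: "real \<Rightarrow> ennreal"
  assumes Q [measurable]: "(\<lambda>r. indicator {0..} r * Q r) \<in> borel_measurable borel"
    and m [measurable]: "(\<lambda>r. indicator {0..} r * m r) \<in> borel_measurable borel"
    and s0: "0 \<le> s" and s\<tau>: "s \<le> \<tau>" and \<tau>t: "\<tau> \<le> t"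
    and fin: "(\<integral>\<^sup>+ r. m r * indicator {s..t} r \<partial>lborel) < \<infinity>" and c0: "0 \<le> c" and S0: "0 \<le> S"
  defines "I \<equiv> \<lambda>u. enn2real (\<integral>\<^sup>+ r. m r * indicator {s..u} r \<partial>lborel)"
  shows "(\<integral>\<^sup>+ u. exp_neg (\<integral>\<^sup>+ r. Q r * indicator {\<tau>..u} r \<partial>lborel)
                 * (ennreal S * (Q u + ennreal c * m u) * ennreal (exp (c * (I t - I u))))
                 * indicator {\<tau><..t} u \<partial>lborel)
         + ennreal S * exp_neg (\<integral>\<^sup>+ r. Q r * indicator {\<tau>..t} r \<partial>lborel)
       \<le> ennreal (S * exp (c * (I t - I \<tau>)))"
proof -
  define g where "g r = indicator {0..} r * Q r + ennreal c * (indicator {0..} r * m r)" for r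
  have [measurable]: "g \<in> borel_measurable borel" unfolding g_def by measurable
  define G where "G u = (\<integral>\<^sup>+ r. g r * indicator {\<tau><..u} r \<partial>lborel)" for u
  define F where "F u = (\<integral>\<^sup>+ r. Q r * indicator {\<tau>..u} r \<partial>lborel)" for u
  define E where "E u = exp (c * (I t - I u))" for u
  have factor: "exp_neg (F u) * ennreal (E u) = ennreal (E \<tau>) * exp_neg (G u)" if "\<tau> \<le> u" "u \<le> t" for u
    unfolding F_def E_def G_def g_def I_def
    by (rule discounted_survival_factor[OF Q m s0 s\<tau> that fin c0])
  have "(\<integral>\<^sup>+ u. exp_neg (F u) * (ennreal S * (Q u + ennreal c * m u) * ennreal (E u)) * indicator {\<tau><..t} u \<partial>lborel)
      = (\<integral>\<^sup>+ u. (ennreal S * ennreal (E \<tau>)) * (g u * exp_neg (G u) * indicator {\<tau><..t} u) \<partial>lborel)"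
  proof (intro nn_integral_cong)
    fix u
    show "exp_neg (F u) * (ennreal S * (Q u + ennreal c * m u) * ennreal (E u)) * indicator {\<tau><..t} u
        = (ennreal S * ennreal (E \<tau>)) * (g u * exp_neg (G u) * indicator {\<tau><..t} u)"
    proof (cases "\<tau> < u \<and> u \<le> t")
      case True
      then have "g u = Q u + ennreal c * m u" using s0 s\<tau> by (simp add: g_def)
      with factor[of u] True show ?thesis
        by (simp add: mult_ac) (metis (no_types, lifting) mult.assoc mult.commute)
    qed auto
  qed
  also have "\<dots> = (ennreal S * ennreal (E \<tau>)) * (\<integral>\<^sup>+ u. g u * exp_neg (G u) * indicator {\<tau><..t} u \<partial>lborel)"
    unfolding G_def by (rule nn_integral_cmult) measurable
  finally have body: "(\<integral>\<^sup>+ u. exp_neg (F u) * (ennreal S * (Q u + ennreal c * m u) * ennreal (E u))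
                             * indicator {\<tau><..t} u \<partial>lborel)
      = (ennreal S * ennreal (E \<tau>)) * (\<integral>\<^sup>+ u. g u * exp_neg (G u) * indicator {\<tau><..t} u \<partial>lborel)" .
  have tail: "exp_neg (F t) = ennreal (E \<tau>) * exp_neg (G t)"
    using factor[OF \<tau>t order_refl] by (simp add: E_def)
  have "(\<integral>\<^sup>+ u. exp_neg (F u) * (ennreal S * (Q u + ennreal c * m u) * ennreal (E u)) * indicator {\<tau><..t} u \<partial>lborel)
        + ennreal S * exp_neg (F t)
      = (ennreal S * ennreal (E \<tau>)) * ((\<integral>\<^sup>+ u. g u * exp_neg (G u) * indicator {\<tau><..t} u \<partial>lborel) + exp_neg (G t))"
    unfolding body tail by (simp add: distrib_left mult_ac)
  also have "\<dots> \<le> (ennreal S * ennreal (E \<tau>)) * 1"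
    unfolding G_def by (intro mult_left_mono survival_inequality) auto
  finally show ?thesis using S0 unfolding F_def E_def by (simp add: ennreal_mult)
qed

section \<open>Collision kernels and environments\<close>

lemma collision_kernel_space: "collision_kernel B \<Longrightarrow> space (B x) = UNIV"
  unfolding collision_kernel_def using sets_eq_imp_space_eq[of "B x" borel] by auto

text \<open>By homogeneity (LBP) the total collision rate of a relative velocity x is |x|.\<close>
lemma collision_kernel_mass:
  fixes B :: "'a::euclidean_space \<Rightarrow> 'a measure"
  assumes ck: "collision_kernel B" and lbp: "LBP B"
  shows "emeasure (B x) (space (B x)) = ennreal (norm x)"
proof -
  have hom: "\<And>c u. c \<ge> 0 \<Longrightarrow> u \<in> sphere (0::'a) 1 \<Longrightarrow> B (c *\<^sub>R u) = scale_measure (ennreal c) (B u)"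
    using lbp unfolding LBP_def by auto
  have one: "\<And>u. u \<in> sphere (0::'a) 1 \<Longrightarrow> emeasure (B u) (space (B u)) = 1"
    using ck unfolding collision_kernel_def by auto
  obtain u :: 'a where u: "u \<in> sphere 0 1" and x: "x = norm x *\<^sub>R u"
  proof (cases "x = 0")
    case True
    obtain b :: 'a where "b \<in> Basis" using nonempty_Basis by blast
    then show ?thesis using that[of b] True by simp
  next
    case False
    then show ?thesis using that[of "x /\<^sub>R norm x"] by simp
  qed
  then have "B x = scale_measure (ennreal (norm x)) (B u)" using hom[OF _ u, of "norm x"] by simp
  then show ?thesis using one[OF u] by (simp add: space_scale_measure)
qed

lemma collision_kernel_AE_sphere:
  assumes ck: "collision_kernel B"
  shows "AE \<sigma> in B x. norm \<sigma> = 1"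
proof -
  have "sets (B x) = sets borel" "emeasure (B x) (- sphere 0 1) = 0"
    using ck unfolding collision_kernel_def by auto
  then show ?thesis
    by (subst AE_iff_measurable[of "- sphere 0 1"]) (auto simp: collision_kernel_space[OF ck])
qed

lemma kac_rate_eq:
  assumes "collision_kernel B" and "LBP B"
  shows "kac_rate B \<rho> r v = (\<integral>\<^sup>+ w. ennreal (2 * norm (v - w)) \<partial>\<rho> r)"
  unfolding kac_rate_def by (simp add: collision_kernel_mass[OF assms] ennreal_mult)

lemma environment_sets: "environment \<rho> \<Longrightarrow> sets (\<rho> r) = sets borel"
  unfolding environment_def by auto

lemma environment_space: "environment \<rho> \<Longrightarrow> space (\<rho> r) = UNIV"
  using sets_eq_imp_space_eq[of "\<rho> r" borel] by (simp add: environment_sets)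

lemma environment_mass: "environment \<rho> \<Longrightarrow> r \<ge> 0 \<Longrightarrow> emeasure (\<rho> r) (space (\<rho> r)) \<le> 1"
  unfolding environment_def by auto

lemma environment_measurable_cong:
  "environment \<rho> \<Longrightarrow> f \<in> borel_measurable borel \<Longrightarrow> f \<in> borel_measurable (\<rho> r)"
  using measurable_cong_sets[OF environment_sets refl] by blast

text \<open>On nonnegative times an environment is a measurable family of subprobability measures,
  so integrals against it are measurable in time.\<close>
lemma environment_integral_measurable:
  fixes \<rho> :: "real \<Rightarrow> 'a::euclidean_space measure" and f :: "'a \<Rightarrow> ennreal"
  assumes env: "environment \<rho>" and f: "f \<in> borel_measurable borel"
  shows "(\<lambda>r. indicator {0..} r * (\<integral>\<^sup>+ w. f w \<partial>\<rho> r)) \<in> borel_measurable borel"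
proof -
  have "\<rho> \<in> measurable (restrict_space borel {0..}) (subprob_algebra borel)"
  proof (rule measurable_subprob_algebra)
    fix r assume "r \<in> space (restrict_space (borel :: real measure) {0..})"
    then show "subprob_space (\<rho> r)"
      by (intro subprob_spaceI)
         (use environment_mass[OF env] environment_space[OF env] in \<open>auto simp: space_restrict_space\<close>)
  qed (use env in \<open>auto simp: environment_def\<close>)
  then have "(\<lambda>r. \<integral>\<^sup>+ w. f w \<partial>\<rho> r) \<in> borel_measurable (restrict_space borel {0..})"
    using measurable_compose nn_integral_measurable_subprob_algebra[OF f] by blast
  then have "(\<lambda>r. (\<integral>\<^sup>+ w. f w \<partial>\<rho> r) * indicator {0..} r) \<in> borel_measurable borel"
    by (subst (asm) borel_measurable_restrict_space_iff_ennreal) auto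
  then show ?thesis by (simp add: mult.commute)
qed

section \<open>Moment weights and their increments at a collision\<close>

text \<open>At a collision of v with an environment
  velocity w, v is replaced by v', v'_* and w, which increases the total weight by at most an
  explicit function of |v|, |w| (increment_bound); multiplied by the rate 2|v - w| this is at
  most c(p) W_p(v) (1 + |w|^(p+1)).\<close>
definition weight :: "real \<Rightarrow> 'a::real_normed_vector \<Rightarrow> real" where
  "weight p v = 1 + norm v powr p"

definition increment_bound :: "real \<Rightarrow> real \<Rightarrow> real \<Rightarrow> real" where
  "increment_bound p a b = 2 + b powr p + 2 powr (p/2) * b powr p
                           + (p/2) * 2 powr (p/2 - 1) * (b powr 2 * a powr (p - 2))"

definition moment_const :: "real \<Rightarrow> real" where
  "moment_const p = 8 + 4 * (1 + 2 powr (p/2)) + p * 2 powr (p/2)"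

lemma moment_const_nonneg: "0 \<le> p \<Longrightarrow> 0 \<le> moment_const p"
  unfolding moment_const_def by (intro add_nonneg_nonneg mult_nonneg_nonneg) auto

lemma increment_bound_nonneg: "0 \<le> p \<Longrightarrow> 0 \<le> increment_bound p a b"
  unfolding increment_bound_def by (intro add_nonneg_nonneg mult_nonneg_nonneg) auto

lemma weight_nonneg: "0 \<le> weight p v"
  unfolding weight_def by (smt (verit) powr_ge_zero)

lemma energy_conservation:
  fixes v w \<sigma> :: "'a::euclidean_space"
  assumes "norm \<sigma> = 1"
  shows "norm (vpost v w \<sigma>) ^ 2 + norm (vpost_star v w \<sigma>) ^ 2 = norm v ^ 2 + norm w ^ 2"
proof -
  have unit: "\<sigma> \<bullet> \<sigma> = 1" using assms by (simp add: power2_norm_eq_inner[symmetric])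
  have dist: "norm (v - w) ^ 2 = v \<bullet> v - 2 * (v \<bullet> w) + w \<bullet> w"
    by (simp add: power2_norm_eq_inner algebra_simps inner_commute)
  show ?thesis
    unfolding vpost_def vpost_star_def power2_norm_eq_inner
    using unit dist by (simp add: algebra_simps inner_commute power2_eq_square)
qed

lemma powr_le_one_plus_powr:
  fixes x :: real
  assumes "0 \<le> x" "0 \<le> \<alpha>" "\<alpha> \<le> \<gamma>"
  shows "x powr \<alpha> \<le> 1 + x powr \<gamma>"
proof (cases "x \<le> 1")
  case True
  then have "x powr \<alpha> \<le> 1" using assms by (intro powr_le1) auto
  then show ?thesis by (smt (verit) powr_ge_zero)
next
  case False
  then have "x powr \<alpha> \<le> x powr \<gamma>" using assms by (intro powr_mono) auto
  then show ?thesis by simp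
qed

lemma powr_mult_le_weights:
  fixes x y :: real
  assumes "0 \<le> x" "0 \<le> y" "0 \<le> \<alpha>" "\<alpha> \<le> \<gamma>" "0 \<le> \<beta>" "\<beta> \<le> \<delta>"
  shows "x powr \<alpha> * y powr \<beta> \<le> (1 + x powr \<gamma>) * (1 + y powr \<delta>)"
  using assms by (intro mult_mono powr_le_one_plus_powr) auto

lemma mult_powr_self: "0 \<le> (x::real) \<Longrightarrow> x * x powr q = x powr (q + 1)"
  by (cases "x = 0") (simp_all add: powr_add[of x q 1])

lemma powr_superadditive:
  fixes x y q :: real
  assumes "0 \<le> x" "0 \<le> y" "1 \<le> q"
  shows "x powr q + y powr q \<le> (x + y) powr q"
proof -
  have le: "z powr q \<le> z * (x + y) powr (q - 1)" if "0 \<le> z" "z \<le> x + y" for z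
  proof -
    have "z powr q = z * z powr (q - 1)" using mult_powr_self[OF \<open>0 \<le> z\<close>, of "q - 1"] by simp
    also have "\<dots> \<le> z * (x + y) powr (q - 1)"
      using that assms by (intro mult_left_mono powr_mono2) auto
    finally show ?thesis .
  qed
  have "x powr q + y powr q \<le> (x + y) * (x + y) powr (q - 1)"
    using le[of x] le[of y] assms by (simp add: distrib_right add_mono)
  also have "\<dots> = (x + y) powr q" using mult_powr_self[of "x + y" "q - 1"] assms by simp
  finally show ?thesis .
qed

lemma powr_increment_le:
  fixes A B q :: real
  assumes "0 < A" "0 \<le> B" "1 \<le> q"
  shows "(A + B) powr q - A powr q \<le> q * B * (A + B) powr (q - 1)"
proof (cases "B = 0")
  case False
  then have AB: "A < A + B" using assms by simp
  have "\<And>x. A \<le> x \<Longrightarrow> x \<le> A + B \<Longrightarrow> DERIV (\<lambda>z. z powr q) x :> q * x powr (q - 1)"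
    using assms by (intro has_real_derivative_powr) auto
  from MVT2[OF AB this] obtain z where z: "A < z" "z < A + B"
    "(A + B) powr q - A powr q = (A + B - A) * (q * z powr (q - 1))" by blast
  have "z powr (q - 1) \<le> (A + B) powr (q - 1)"
    using z assms by (intro powr_mono2) auto
  then have "(A + B - A) * (q * z powr (q - 1)) \<le> B * (q * (A + B) powr (q - 1))"
    using assms by (simp add: mult_left_mono)
  then show ?thesis using z by (simp add: algebra_simps)
qed simp

lemma energy_powr_increment_le:
  fixes a b p :: real
  assumes a: "0 \<le> a" and b: "0 \<le> b" and p: "2 \<le> p"
  shows "(a\<^sup>2 + b\<^sup>2) powr (p/2) - a powr p
     \<le> 2 powr (p/2) * b powr p + (p/2) * 2 powr (p/2 - 1) * (b powr 2 * a powr (p - 2))"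
proof -
  have sq_powr: "(z\<^sup>2) powr (r/2) = z powr r" if "0 \<le> z" for z r :: real
    using that by (simp add: powr_powr powr_numeral[symmetric] del: powr_numeral)
  have rest_nonneg: "0 \<le> (p/2) * 2 powr (p/2 - 1) * (b powr 2 * a powr (p - 2))" using p by simp
  show ?thesis
  proof (cases "a < b")
    case True
    have "(a\<^sup>2 + b\<^sup>2) powr (p/2) \<le> (2 * b\<^sup>2) powr (p/2)"
      using True a b p by (intro powr_mono2) (auto simp: power_mono)
    also have "\<dots> = 2 powr (p/2) * b powr p"
      using b by (simp add: powr_mult sq_powr)
    finally show ?thesis using powr_ge_zero[of a p] rest_nonneg by linarith
  next
    case False
    show ?thesis
    proof (cases "a = 0")
      case True
      then show ?thesis using False b p by simp
    next
      case a0: False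
      have "(a\<^sup>2 + b\<^sup>2) powr (p/2) - (a\<^sup>2) powr (p/2) \<le> (p/2) * b\<^sup>2 * (a\<^sup>2 + b\<^sup>2) powr (p/2 - 1)"
        using a a0 p by (intro powr_increment_le) auto
      also have "\<dots> \<le> (p/2) * b\<^sup>2 * (2 * a\<^sup>2) powr (p/2 - 1)"
        using False a b p by (intro mult_left_mono powr_mono2) (auto simp: power_mono)
      also have "(2 * a\<^sup>2) powr (p/2 - 1) = 2 powr (p/2 - 1) * a powr (p - 2)"
        using sq_powr[OF a, of "p - 2"] by (simp add: powr_mult diff_divide_distrib)
      finally have "(a\<^sup>2 + b\<^sup>2) powr (p/2) - a powr p \<le> (p/2) * b\<^sup>2 * (2 powr (p/2 - 1) * a powr (p - 2))"
        using sq_powr[OF a, of p] by simp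
      also have "\<dots> = (p/2) * 2 powr (p/2 - 1) * (b powr 2 * a powr (p - 2))"
        using b by (simp add: mult_ac)
      finally show ?thesis using powr_ge_zero[of 2 "p/2"] powr_ge_zero[of b p] by (smt (verit) mult_nonneg_nonneg)
    qed
  qed
qed

lemma weight_increment_le:
  fixes v w \<sigma> :: "'a::euclidean_space"
  assumes p: "2 \<le> p" and \<sigma>: "norm \<sigma> = 1"
  shows "weight p (vpost v w \<sigma>) + weight p (vpost_star v w \<sigma>) + weight p w - weight p v
         \<le> increment_bound p (norm v) (norm w)"
proof -
  let ?x = "norm (vpost v w \<sigma>)" and ?y = "norm (vpost_star v w \<sigma>)" and ?a = "norm v" and ?b = "norm w"
  have pw: "z powr p = (z\<^sup>2) powr (p/2)" if "0 \<le> z" for z :: real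
    using that by (simp add: powr_powr powr_numeral[symmetric] del: powr_numeral)
  have "?x powr p + ?y powr p \<le> (?x\<^sup>2 + ?y\<^sup>2) powr (p/2)"
    using p by (simp add: pw powr_superadditive)
  also have "?x\<^sup>2 + ?y\<^sup>2 = ?a\<^sup>2 + ?b\<^sup>2" by (rule energy_conservation[OF \<sigma>])
  finally show ?thesis
    using energy_powr_increment_le[of ?a ?b p] p unfolding weight_def increment_bound_def by simp
qed

lemma weight_increment_rate_le:
  fixes v w :: "'a::euclidean_space"
  assumes p: "2 \<le> p"
  shows "2 * norm (v - w) * increment_bound p (norm v) (norm w)
         \<le> moment_const p * weight p v * (1 + norm w powr (p + 1))"
proof -
  define a where "a = norm v"
  define b where "b = norm w"
  have a: "0 \<le> a" and b: "0 \<le> b" by (auto simp: a_def b_def)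
  define P where "P = (1 + a powr p) * (1 + b powr (p + 1))"
  define q where "q = 2 powr (p/2)"
  define K where "K = (p/2) * 2 powr (p/2 - 1)"
  have q0: "0 \<le> q" and K0: "0 \<le> K" using p by (auto simp: q_def K_def)
  have K4: "4 * K = p * q"
    using powr_add[of 2 "p/2 - 1" 1] by (simp add: K_def q_def)
  have monomial_le: "a powr \<alpha> * b powr \<beta> \<le> P" if "0 \<le> \<alpha>" "\<alpha> \<le> p" "0 \<le> \<beta>" "\<beta> \<le> p + 1" for \<alpha> \<beta>
    unfolding P_def using powr_mult_le_weights[OF a b that] .
  have P1: "1 + a powr p \<le> P" "1 + b powr (p + 1) \<le> P"
    using monomial_le[of p 0] monomial_le[of 0 "p + 1"] p unfolding P_def
    by (auto intro!: mult_le_cancel_left1[THEN iffD2] mult_le_cancel_right1[THEN iffD2])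
       (smt (verit) powr_ge_zero)+
  (* the six monomials of 2 (a + b) increment_bound p a b are each at most P *)
  have T1: "a \<le> P" using powr_le_one_plus_powr[OF a, of 1 p] p P1 a by simp
  have T2: "b \<le> P" using powr_le_one_plus_powr[OF b, of 1 "p + 1"] p P1 b by simp
  have T3: "a * b powr p \<le> P" using monomial_le[of 1 p] p a by simp
  have T4: "b * b powr p \<le> P" using P1 b by (simp add: mult_powr_self)
  have T5: "a * (b powr 2 * a powr (p - 2)) \<le> P"
  proof -
    have "a * (b powr 2 * a powr (p - 2)) = (a * a powr (p - 2)) * b powr 2" by (simp add: mult_ac)
    also have "\<dots> = a powr (p - 1) * b powr 2" using mult_powr_self[OF a, of "p - 2"] by simp
    finally show ?thesis by (simp only:) (rule monomial_le, use p in auto)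
  qed
  have T6: "b * (b powr 2 * a powr (p - 2)) \<le> P"
  proof -
    have "b * (b powr 2 * a powr (p - 2)) = a powr (p - 2) * (b * b powr 2)" by (simp add: mult_ac)
    also have "\<dots> = a powr (p - 2) * b powr 3" using mult_powr_self[OF b, of 2] by simp
    finally show ?thesis by (simp only:) (rule monomial_le, use p in auto)
  qed
  have M0: "0 \<le> increment_bound p a b" using p by (simp add: increment_bound_nonneg)
  have eq: "2 * (a + b) * increment_bound p a b
       = 4 * a + 4 * b + 2 * (1 + q) * (a * b powr p + b * b powr p)
         + 2 * K * (a * (b powr 2 * a powr (p - 2)) + b * (b powr 2 * a powr (p - 2)))"
    unfolding increment_bound_def q_def K_def by (simp add: algebra_simps)
  have "2 * norm (v - w) * increment_bound p a b \<le> 2 * (a + b) * increment_bound p a b"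
    using norm_triangle_ineq4[of v w] M0 unfolding a_def b_def by (intro mult_right_mono) auto
  also have "\<dots> \<le> 4 * P + 4 * P + 2 * (1 + q) * (P + P) + 2 * K * (P + P)"
    unfolding eq using T1 T2 T3 T4 T5 T6 q0 K0 by (intro add_mono mult_left_mono) auto
  also have "\<dots> = moment_const p * P" unfolding moment_const_def using K4 by (simp add: q_def algebra_simps)
  finally show ?thesis unfolding P_def weight_def a_def b_def by (simp add: mult.assoc)
qed

text \<open>For p = 2 energy conservation gives the sharper increment 2 + 2|w|^2, whose rate
  bound yields the constant c(2) = 8.\<close>
lemma weight_increment_le_2:
  fixes v w \<sigma> :: "'a::euclidean_space"
  assumes "norm \<sigma> = 1"
  shows "weight 2 (vpost v w \<sigma>) + weight 2 (vpost_star v w \<sigma>) + weight 2 w - weight 2 v \<le> 2 + 2 * norm w ^ 2"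
  using energy_conservation[OF assms, of v w] unfolding weight_def by simp

lemma weight_increment_rate_le_2:
  fixes v w :: "'a::euclidean_space"
  shows "2 * norm (v - w) * (2 + 2 * norm w ^ 2) \<le> 8 * weight 2 v * (1 + norm w powr (2 + 1))"
proof -
  define a where "a = norm v"
  define b where "b = norm w"
  have a: "0 \<le> a" and b: "0 \<le> b" by (auto simp: a_def b_def)
  have cube: "norm w powr (2 + 1) = b ^ 3" using b unfolding b_def by simp
  have a_le_square: "a \<le> (1/2) * (1 + a\<^sup>2)" using sum_squares_bound[of a 1] by (simp add: algebra_simps power2_eq_square)
  have cubic_le: "(1/2) * (1 + b\<^sup>2) + b + b ^ 3 \<le> 2 + 2 * b ^ 3"
  proof -
    have "0 \<le> b * (b - 1)\<^sup>2 + (3/2) * (b - 2/3)\<^sup>2 + 5/6" using b by simp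
    moreover have "b * (b - 1)\<^sup>2 + (3/2) * (b - 2/3)\<^sup>2 + 5/6 = (2 + 2 * b ^ 3) - ((1/2) * (1 + b\<^sup>2) + b + b ^ 3)"
      by (simp add: power2_eq_square power3_eq_cube field_simps)
    ultimately show ?thesis by linarith
  qed
  have a_part: "a * (1 + b\<^sup>2) \<le> ((1/2) * (1 + a\<^sup>2)) * (1 + b\<^sup>2)"
    using a_le_square by (intro mult_right_mono) auto
  have b_part: "b * (1 + b\<^sup>2) \<le> (1 + a\<^sup>2) * (b + b ^ 3)"
  proof -
    have "b * (1 + b\<^sup>2) = 1 * (b + b ^ 3)" by (simp add: algebra_simps power2_eq_square power3_eq_cube)
    also have "\<dots> \<le> (1 + a\<^sup>2) * (b + b ^ 3)" using b by (intro mult_right_mono) auto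
    finally show ?thesis .
  qed
  have split_sum: "(a + b) * (1 + b\<^sup>2) = a * (1 + b\<^sup>2) + b * (1 + b\<^sup>2)" by (simp add: algebra_simps)
  have factor_weight: "((1/2) * (1 + a\<^sup>2)) * (1 + b\<^sup>2) + (1 + a\<^sup>2) * (b + b ^ 3) = (1 + a\<^sup>2) * ((1/2) * (1 + b\<^sup>2) + b + b ^ 3)"
    by (simp add: field_simps)
  have "(a + b) * (1 + b\<^sup>2) \<le> (1 + a\<^sup>2) * ((1/2) * (1 + b\<^sup>2) + b + b ^ 3)"
    using a_part b_part split_sum factor_weight by linarith
  also have "\<dots> \<le> (1 + a\<^sup>2) * (2 + 2 * b ^ 3)" using cubic_le by (intro mult_left_mono) auto
  finally have product_le: "(a + b) * (1 + b\<^sup>2) \<le> (1 + a\<^sup>2) * (2 + 2 * b ^ 3)" .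
  have triangle: "norm (v - w) \<le> a + b" using norm_triangle_ineq4[of v w] unfolding a_def b_def .
  have "2 * norm (v - w) * (2 + 2 * norm w ^ 2) = 4 * (norm (v - w) * (1 + b\<^sup>2))"
    unfolding b_def by (simp add: algebra_simps)
  also have "\<dots> \<le> 4 * ((a + b) * (1 + b\<^sup>2))"
    using triangle by (intro mult_left_mono mult_right_mono) auto
  also have "\<dots> \<le> 4 * ((1 + a\<^sup>2) * (2 + 2 * b ^ 3))" using product_le by simp
  also have "\<dots> = 8 * weight 2 v * (1 + norm w powr (2 + 1))"
    unfolding weight_def cube a_def by (simp add: algebra_simps)
  finally show ?thesis .
qed

lemma collision_rate_le_weight:
  fixes v w :: "'a::euclidean_space"
  shows "2 * norm (v - w) \<le> 3 * weight 2 v * (1 + norm w powr (2 + 1))"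
proof -
  define a where "a = norm v"
  define b where "b = norm w"
  have a: "0 \<le> a" and b: "0 \<le> b" by (auto simp: a_def b_def)
  have cube: "norm w powr (2 + 1) = b ^ 3" using b by (simp add: b_def)
  have a_le_square: "2 * a \<le> 1 + a\<^sup>2" using sum_squares_bound[of a 1] by (simp add: algebra_simps power2_eq_square)
  have b_le_cube: "b \<le> 1 + b ^ 3"
  proof -
    have "0 \<le> (b - 1)\<^sup>2 * (b + 1) + b\<^sup>2" using b by simp
    moreover have "(b - 1)\<^sup>2 * (b + 1) + b\<^sup>2 = 1 + b ^ 3 - b"
      by (simp add: algebra_simps power2_eq_square power3_eq_cube)
    ultimately show ?thesis by linarith
  qed
  have a_le_product: "1 + a\<^sup>2 \<le> (1 + a\<^sup>2) * (1 + b ^ 3)" using b by (simp add: algebra_simps)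
  have b_le_product: "1 + b ^ 3 \<le> (1 + a\<^sup>2) * (1 + b ^ 3)" using b by (simp add: algebra_simps)
  have "2 * norm (v - w) \<le> 2 * a + 2 * b" using norm_triangle_ineq4[of v w] unfolding a_def b_def by simp
  also have "\<dots> \<le> 3 * ((1 + a\<^sup>2) * (1 + b ^ 3))" using a_le_square b_le_cube a_le_product b_le_product by linarith
  also have "\<dots> = 3 * weight 2 v * (1 + norm w powr (2 + 1))"
    unfolding weight_def cube a_def by (simp add: algebra_simps)
  finally show ?thesis .
qed

section \<open>The jump chain and its Markov property\<close>

lemma space_kstate_space: "space kstate_space = UNIV"
  unfolding kstate_space_def by (auto simp: space_pair_measure space_PiM)

lemma lin_kac_processD:
  assumes "lin_kac_process B \<rho> s v0 M X"
  shows "prob_space M"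
    and "X n \<in> measurable M kstate_space"
    and "\<omega> \<in> space M \<Longrightarrow> X 0 \<omega> = (ereal s, 1, \<lambda>_. (v0, True))"
    and "g \<in> borel_measurable kstate_space \<Longrightarrow> A \<in> kac_history M X n \<Longrightarrow>
         (\<integral>\<^sup>+ \<omega>. g (X (Suc n) \<omega>) * indicator A \<omega> \<partial>M) = (\<integral>\<^sup>+ \<omega>. kac_step B \<rho> g (X n \<omega>) * indicator A \<omega> \<partial>M)"
  using assms unfolding lin_kac_process_def by auto

lemma kac_history_preimage: "A \<in> sets kstate_space \<Longrightarrow> X n -` A \<inter> space M \<in> kac_history M X n"
  unfolding kac_history_def by (intro sigma_sets.Basic) auto

lemma markov_step_integral:
  assumes P: "lin_kac_process B \<rho> s v0 M X" and g: "g \<in> borel_measurable kstate_space"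
  shows "(\<integral>\<^sup>+ \<omega>. g (X (Suc n) \<omega>) \<partial>M) = (\<integral>\<^sup>+ \<omega>. kac_step B \<rho> g (X n \<omega>) \<partial>M)"
proof -
  have "space M \<in> kac_history M X n"
    unfolding kac_history_def by (rule sigma_sets_top)
  then have "(\<integral>\<^sup>+ \<omega>. g (X (Suc n) \<omega>) * indicator (space M) \<omega> \<partial>M)
      = (\<integral>\<^sup>+ \<omega>. kac_step B \<rho> g (X n \<omega>) * indicator (space M) \<omega> \<partial>M)"
    by (rule lin_kac_processD(4)[OF P g])
  then show ?thesis by (simp cong: nn_integral_cong)
qed

text \<open>Only an inequality is claimed, since
  kac_step g need not be measurable; it follows by induction over measurable \<phi>.\<close>
lemma markov_step_integral_weighted:
  assumes P: "lin_kac_process B \<rho> s v0 M X"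
    and \<phi>: "\<phi> \<in> borel_measurable kstate_space" and g [measurable]: "g \<in> borel_measurable kstate_space"
  shows "(\<integral>\<^sup>+ \<omega>. \<phi> (X n \<omega>) * g (X (Suc n) \<omega>) \<partial>M) \<le> (\<integral>\<^sup>+ \<omega>. \<phi> (X n \<omega>) * kac_step B \<rho> g (X n \<omega>) \<partial>M)"
  using \<phi>
proof (induction rule: borel_measurable_induct)
  note X [measurable] = lin_kac_processD(2)[OF P]
  let ?K = "\<lambda>\<omega>. kac_step B \<rho> g (X n \<omega>)" and ?g' = "\<lambda>\<omega>. g (X (Suc n) \<omega>)"
  {
    case (cong f h)
    then show ?case by (simp add: space_kstate_space)
  next
    case (set A)
    have "indicator A (X n \<omega>) = (indicator (X n -` A \<inter> space M) \<omega> :: ennreal)" if "\<omega> \<in> space M" for \<omega>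
      using that by (auto simp: indicator_def)
    then show ?case
      using lin_kac_processD(4)[OF P g kac_history_preimage[OF set]]
      by (simp add: mult.commute cong: nn_integral_cong)
  next
    case (mult u c)
    have "(\<integral>\<^sup>+ \<omega>. c * u (X n \<omega>) * ?g' \<omega> \<partial>M) = c * (\<integral>\<^sup>+ \<omega>. u (X n \<omega>) * ?g' \<omega> \<partial>M)"
      using mult by (subst nn_integral_cmult[symmetric]) (auto simp: mult.assoc)
    also have "\<dots> \<le> c * (\<integral>\<^sup>+ \<omega>. u (X n \<omega>) * ?K \<omega> \<partial>M)"
      using mult by (intro mult_left_mono) auto
    also have "\<dots> \<le> (\<integral>\<^sup>+ \<omega>. c * u (X n \<omega>) * ?K \<omega> \<partial>M)"
      using nn_integral_cmult_le by (simp add: mult.assoc)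
    finally show ?case .
  next
    case (add u v)
    have "(\<integral>\<^sup>+ \<omega>. (v (X n \<omega>) + u (X n \<omega>)) * ?g' \<omega> \<partial>M)
        = (\<integral>\<^sup>+ \<omega>. v (X n \<omega>) * ?g' \<omega> \<partial>M) + (\<integral>\<^sup>+ \<omega>. u (X n \<omega>) * ?g' \<omega> \<partial>M)"
      using add by (subst nn_integral_add[symmetric]) (auto simp: distrib_right)
    also have "\<dots> \<le> (\<integral>\<^sup>+ \<omega>. v (X n \<omega>) * ?K \<omega> \<partial>M) + (\<integral>\<^sup>+ \<omega>. u (X n \<omega>) * ?K \<omega> \<partial>M)"
      using add by (intro add_mono) auto
    also have "\<dots> \<le> (\<integral>\<^sup>+ \<omega>. (v (X n \<omega>) + u (X n \<omega>)) * ?K \<omega> \<partial>M)"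
      using nn_integral_superadd by (simp add: distrib_right)
    finally show ?case .
  next
    case (seq U)
    have [measurable]: "\<And>i. U i \<in> borel_measurable kstate_space" and "incseq U" using seq by auto
    have U_mono: "U i y \<le> U j y" if "i \<le> j" for i j y
      using le_funD[OF incseqD[OF \<open>incseq U\<close> that]] .
    have "incseq (\<lambda>i \<omega>. U i (X n \<omega>) * ?g' \<omega>)"
      by (auto simp: incseq_def le_fun_def intro!: mult_right_mono U_mono)
    then have "(\<integral>\<^sup>+ \<omega>. (SUP i. U i) (X n \<omega>) * ?g' \<omega> \<partial>M) = (SUP i. \<integral>\<^sup>+ \<omega>. U i (X n \<omega>) * ?g' \<omega> \<partial>M)"
      by (simp add: nn_integral_monotone_convergence_SUP[symmetric] SUP_mult_right_ennreal image_comp)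
    also have "\<dots> \<le> (\<integral>\<^sup>+ \<omega>. (SUP i. U i) (X n \<omega>) * ?K \<omega> \<partial>M)"
    proof (rule SUP_least)
      fix i
      have "(\<integral>\<^sup>+ \<omega>. U i (X n \<omega>) * ?g' \<omega> \<partial>M) \<le> (\<integral>\<^sup>+ \<omega>. U i (X n \<omega>) * ?K \<omega> \<partial>M)"
        using seq by blast
      also have "\<dots> \<le> (\<integral>\<^sup>+ \<omega>. (SUP i. U i) (X n \<omega>) * ?K \<omega> \<partial>M)"
        by (intro nn_integral_mono mult_right_mono) (auto intro: SUP_upper)
      finally show "(\<integral>\<^sup>+ \<omega>. U i (X n \<omega>) * ?g' \<omega> \<partial>M) \<le> \<dots>" .
    qed
    finally show ?case .
  }
qed

lemma kstate_after_start_cases: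
  assumes "ereal s \<le> fst y"
  obtains (finite) \<tau> k f where "y = (ereal \<tau>, k, f)" "s \<le> \<tau>"
    | (infinite) k f where "y = (\<infinity>, k, f)"
proof -
  obtain \<tau>' k f where y: "y = (\<tau>', k, f)" by (cases y) auto
  with assms show ?thesis by (cases \<tau>') (auto intro: that)
qed

lemma kac_step_before_start:
  assumes "ereal s \<le> fst y"
  shows "kac_step B \<rho> (indicator {y. fst y < ereal s}) y = 0"
  using assms
proof (cases rule: kstate_after_start_cases)
  case (finite \<tau> k f)
  then have "(\<integral>\<^sup>+ u \<in> {\<tau><..}. exp_neg (\<integral>\<^sup>+ r \<in> {\<tau>..u}. kac_total_rate B \<rho> r k f \<partial>lborel) *
                (\<Sum>i<k. \<integral>\<^sup>+ w. \<integral>\<^sup>+ \<sigma>. 2 * indicator {y. fst y < ereal s} (ereal u, Suc (Suc k), branch f k i w \<sigma>)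
                                      \<partial>B (fst (f i) - w) \<partial>\<rho> u) \<partial>lborel) = 0"
    by (intro nn_integral_zero') (auto simp: indicator_def)
  then show ?thesis using finite by (simp add: kac_step_def indicator_def)
qed (simp add: kac_step_def indicator_def)

lemma lin_kac_process_time_ge_start:
  assumes P: "lin_kac_process B \<rho> s v0 M X"
  shows "AE \<omega> in M. \<forall>n. ereal s \<le> fst (X n \<omega>)"
proof -
  interpret prob_space M using lin_kac_processD(1)[OF P] .
  note X [measurable] = lin_kac_processD(2)[OF P]
  have "fst -` {ereal s..} \<inter> space kstate_space \<in> sets (kstate_space :: 'a kstate measure)"
    unfolding kstate_space_def by (rule measurable_sets[OF measurable_fst]) simp
  then have start_set: "{y :: 'a kstate. ereal s \<le> fst y} \<in> sets kstate_space"
    by (simp add: space_kstate_space vimage_def)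
  have "AE \<omega> in M. ereal s \<le> fst (X n \<omega>)" for n
  proof (induction n)
    case 0
    show ?case using lin_kac_processD(3)[OF P] by (intro AE_I2) simp
  next
    case (Suc n)
    let ?g = "indicator {y. fst y < ereal s} :: 'a kstate \<Rightarrow> ennreal"
    let ?A = "X n -` {y. ereal s \<le> fst y} \<inter> space M"
    have g [measurable]: "?g \<in> borel_measurable kstate_space"
      unfolding kstate_space_def by measurable
    have "(\<integral>\<^sup>+ \<omega>. ?g (X (Suc n) \<omega>) * indicator ?A \<omega> \<partial>M) = (\<integral>\<^sup>+ \<omega>. kac_step B \<rho> ?g (X n \<omega>) * indicator ?A \<omega> \<partial>M)"
      by (rule lin_kac_processD(4)[OF P g kac_history_preimage[OF start_set]])
    also have "\<dots> = 0"
      by (intro nn_integral_zero') (auto simp: indicator_def kac_step_before_start)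
    moreover have "?A \<in> sets M" using measurable_sets[OF X start_set] .
    then have "(\<lambda>\<omega>. ?g (X (Suc n) \<omega>) * indicator ?A \<omega>) \<in> borel_measurable M" by measurable
    ultimately have "AE \<omega> in M. ?g (X (Suc n) \<omega>) * indicator ?A \<omega> = 0"
      by (simp add: nn_integral_0_iff_AE)
    with Suc AE_space show ?case
      by eventually_elim (auto simp: indicator_def not_less split: if_splits)
  qed
  then show ?thesis by (simp add: AE_all_countable)
qed

lemma lyapunov_partial_sums:
  assumes P: "lin_kac_process B \<rho> s v0 M X"
    and \<phi> [measurable]: "\<phi> \<in> borel_measurable kstate_space"
    and g [measurable]: "g \<in> borel_measurable kstate_space"
    and h [measurable]: "h \<in> borel_measurable kstate_space"
    and step: "\<And>y. ereal s \<le> fst y \<Longrightarrow> \<phi> y * kac_step B \<rho> g y + kac_step B \<rho> h y \<le> h y"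
  shows "(\<integral>\<^sup>+ \<omega>. (\<Sum>n<N. \<phi> (X n \<omega>) * g (X (Suc n) \<omega>)) \<partial>M) + (\<integral>\<^sup>+ \<omega>. h (X N \<omega>) \<partial>M)
         \<le> h (ereal s, 1, \<lambda>_. (v0, True))"
proof (induction N)
  interpret prob_space M using lin_kac_processD(1)[OF P] .
  note [measurable] = lin_kac_processD(2)[OF P]
  {
    case 0
    have "(\<integral>\<^sup>+ \<omega>. h (X 0 \<omega>) \<partial>M) = (\<integral>\<^sup>+ \<omega>. h (ereal s, 1, \<lambda>_. (v0, True)) \<partial>M)"
      by (intro nn_integral_cong) (simp add: lin_kac_processD(3)[OF P])
    then show ?case by (simp add: emeasure_space_1)
  next
    case (Suc N)
    let ?S = "\<lambda>N \<omega>. \<Sum>n<N. \<phi> (X n \<omega>) * g (X (Suc n) \<omega>)"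
    have "(\<integral>\<^sup>+ \<omega>. \<phi> (X N \<omega>) * g (X (Suc N) \<omega>) \<partial>M) + (\<integral>\<^sup>+ \<omega>. h (X (Suc N) \<omega>) \<partial>M)
        \<le> (\<integral>\<^sup>+ \<omega>. \<phi> (X N \<omega>) * kac_step B \<rho> g (X N \<omega>) \<partial>M) + (\<integral>\<^sup>+ \<omega>. kac_step B \<rho> h (X N \<omega>) \<partial>M)"
      using markov_step_integral_weighted[OF P \<phi> g] markov_step_integral[OF P h] by (intro add_mono) auto
    also have "\<dots> \<le> (\<integral>\<^sup>+ \<omega>. \<phi> (X N \<omega>) * kac_step B \<rho> g (X N \<omega>) + kac_step B \<rho> h (X N \<omega>) \<partial>M)"
      by (rule nn_integral_superadd)
    also have "\<dots> \<le> (\<integral>\<^sup>+ \<omega>. h (X N \<omega>) \<partial>M)"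
      using lin_kac_process_time_ge_start[OF P] by (intro nn_integral_mono_AE) (auto intro: step)
    finally have "(\<integral>\<^sup>+ \<omega>. ?S (Suc N) \<omega> \<partial>M) + (\<integral>\<^sup>+ \<omega>. h (X (Suc N) \<omega>) \<partial>M)
        \<le> (\<integral>\<^sup>+ \<omega>. ?S N \<omega> \<partial>M) + (\<integral>\<^sup>+ \<omega>. h (X N \<omega>) \<partial>M)"
      by (simp add: nn_integral_add add.assoc add_left_mono)
    then show ?case using Suc.IH by (rule order_trans)
  }
qed

lemma lyapunov_telescoping:
  assumes P: "lin_kac_process B \<rho> s v0 M X"
    and \<phi> [measurable]: "\<phi> \<in> borel_measurable kstate_space"
    and g [measurable]: "g \<in> borel_measurable kstate_space"
    and h [measurable]: "h \<in> borel_measurable kstate_space"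
    and step: "\<And>y. ereal s \<le> fst y \<Longrightarrow> \<phi> y * kac_step B \<rho> g y + kac_step B \<rho> h y \<le> h y"
  shows "(\<integral>\<^sup>+ \<omega>. (\<Sum>n. \<phi> (X n \<omega>) * g (X (Suc n) \<omega>)) \<partial>M) \<le> h (ereal s, 1, \<lambda>_. (v0, True))"
proof -
  note [measurable] = lin_kac_processD(2)[OF P]
  have "(\<integral>\<^sup>+ \<omega>. (\<Sum>n. \<phi> (X n \<omega>) * g (X (Suc n) \<omega>)) \<partial>M)
      = (\<Sum>n. \<integral>\<^sup>+ \<omega>. \<phi> (X n \<omega>) * g (X (Suc n) \<omega>) \<partial>M)"
    by (rule nn_integral_suminf) simp
  also have "\<dots> = (SUP N. \<integral>\<^sup>+ \<omega>. (\<Sum>n<N. \<phi> (X n \<omega>) * g (X (Suc n) \<omega>)) \<partial>M)"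
    by (simp add: suminf_eq_SUP nn_integral_sum)
  also have "\<dots> \<le> h (ereal s, 1, \<lambda>_. (v0, True))"
  proof (rule SUP_least)
    fix N
    show "(\<integral>\<^sup>+ \<omega>. (\<Sum>n<N. \<phi> (X n \<omega>) * g (X (Suc n) \<omega>)) \<partial>M) \<le> h (ereal s, 1, \<lambda>_. (v0, True))"
      by (rule order_trans[OF _ lyapunov_partial_sums[OF P \<phi> g h step, of N]]) simp
  qed
  finally show ?thesis .
qed

section \<open>A Lyapunov function for the moments\<close>

definition env_moment :: "real \<Rightarrow> (real \<Rightarrow> 'a::euclidean_space measure) \<Rightarrow> real \<Rightarrow> ennreal" where
  "env_moment p \<rho> r = (\<integral>\<^sup>+ w. ennreal (1 + norm w powr (p + 1)) \<partial>\<rho> r)"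

definition moment_integral :: "real \<Rightarrow> (real \<Rightarrow> 'a::euclidean_space measure) \<Rightarrow> real \<Rightarrow> real \<Rightarrow> ennreal" where
  "moment_integral p \<rho> s u = (\<integral>\<^sup>+ r. env_moment p \<rho> r * indicator {s..u} r \<partial>lborel)"

definition total_weight :: "real \<Rightarrow> nat \<Rightarrow> (nat \<Rightarrow> 'a::euclidean_space \<times> bool) \<Rightarrow> real" where
  "total_weight p k f = (\<Sum>i<k. weight p (fst (f i)))"

definition lyapunov :: "real \<Rightarrow> real \<Rightarrow> (real \<Rightarrow> 'a::euclidean_space measure) \<Rightarrow> real \<Rightarrow> real
                          \<Rightarrow> 'a kstate \<Rightarrow> ennreal" where
  "lyapunov p c \<rho> s t y = indicator {ereal s..ereal t} (fst y) *
     ennreal (total_weight p (fst (snd y)) (snd (snd y)) *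
              exp (c * (enn2real (moment_integral p \<rho> s t)
                        - enn2real (moment_integral p \<rho> s (real_of_ereal (fst y))))))"

lemma total_weight_nonneg: "0 \<le> total_weight p k f"
  unfolding total_weight_def by (intro sum_nonneg) (auto simp: weight_nonneg)

lemma env_moment_measurable [measurable]:
  "environment \<rho> \<Longrightarrow> (\<lambda>r. indicator {0..} r * env_moment p \<rho> r) \<in> borel_measurable borel"
  unfolding env_moment_def by (rule environment_integral_measurable) measurable

lemma total_rate_measurable [measurable]:
  assumes ck: "collision_kernel B" and lbp: "LBP B" and env: "environment \<rho>"
  shows "(\<lambda>r. indicator {0..} r * kac_total_rate B \<rho> r k f) \<in> borel_measurable borel"
proof -
  have "(\<lambda>r. indicator {0..} r * kac_total_rate B \<rho> r k f)
     = (\<lambda>r. \<Sum>i<k. indicator {0..} r * (\<integral>\<^sup>+ w. ennreal (2 * norm (fst (f i) - w)) \<partial>\<rho> r))"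
    unfolding kac_total_rate_def kac_rate_eq[OF ck lbp] by (simp add: sum_distrib_left)
  also have "\<dots> \<in> borel_measurable borel"
    by (intro borel_measurable_sum environment_integral_measurable[OF env]) measurable
  finally show ?thesis .
qed

lemma total_weight_branch:
  assumes i: "i < k"
  shows "total_weight p (Suc (Suc k)) (branch f k i w \<sigma>) = total_weight p k f - weight p (fst (f i))
     + weight p (vpost (fst (f i)) w \<sigma>) + weight p (vpost_star (fst (f i)) w \<sigma>) + weight p w"
proof -
  define a where "a = (vpost (fst (f i)) w \<sigma>, snd (f i))"
  have br: "branch f k i w \<sigma> = f(i := a, k := (vpost_star (fst (f i)) w \<sigma>, snd (f i)), Suc k := (w, \<not> snd (f i)))"
    unfolding branch_def a_def by (simp add: Let_def)
  have "(\<Sum>j<k. weight p (fst ((branch f k i w \<sigma>) j))) = (\<Sum>j<k. weight p (fst ((f(i := a)) j)))"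
    unfolding br by (intro sum.cong) auto
  also have "\<dots> = weight p (fst a) + (\<Sum>j\<in>{..<k} - {i}. weight p (fst (f j)))"
    using i by (simp add: sum.remove[of "{..<k}" i])
  also have "(\<Sum>j\<in>{..<k} - {i}. weight p (fst (f j))) = total_weight p k f - weight p (fst (f i))"
    using i by (simp add: total_weight_def sum.remove[of "{..<k}" i])
  finally show ?thesis
    using i by (simp add: total_weight_def br a_def)
qed

lemma branch_integral_le:
  fixes B :: "'a::euclidean_space \<Rightarrow> 'a measure" and N :: "'a measure"
  assumes ck: "collision_kernel B" and lbp: "LBP B" and N: "sets N = sets borel"
    and Sb: "\<And>w \<sigma>. norm \<sigma> = 1 \<Longrightarrow> Sb w \<sigma> \<le> S + M w"
    and M0: "\<And>w. 0 \<le> M w" and M2: "\<And>w. 2 * norm (v - w) * M w \<le> c * W * (1 + norm w powr (p + 1))"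
    and E0: "0 \<le> E" and S0: "0 \<le> S" and c0: "0 \<le> c" and W0: "0 \<le> W"
  shows "(\<integral>\<^sup>+ w. \<integral>\<^sup>+ \<sigma>. 2 * ennreal (Sb w \<sigma> * E) \<partial>B (v - w) \<partial>N)
     \<le> ennreal (E * S) * (\<integral>\<^sup>+ w. ennreal (2 * norm (v - w)) \<partial>N)
       + ennreal (E * c * W) * (\<integral>\<^sup>+ w. ennreal (1 + norm w powr (p + 1)) \<partial>N)"
proof -
  have inner: "(\<integral>\<^sup>+ \<sigma>. 2 * ennreal (Sb w \<sigma> * E) \<partial>B (v - w))
      \<le> ennreal (E * S) * ennreal (2 * norm (v - w)) + ennreal (E * c * W) * ennreal (1 + norm w powr (p + 1))"
    for w
  proof -
    have "AE \<sigma> in B (v - w). 2 * ennreal (Sb w \<sigma> * E) \<le> ennreal (2 * (S + M w) * E)"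
      using collision_kernel_AE_sphere[OF ck, of "v - w"]
    proof eventually_elim
      case (elim \<sigma>)
      have "Sb w \<sigma> * E \<le> (S + M w) * E" using Sb[OF elim] E0 by (intro mult_right_mono) auto
      then have "2 * ennreal (Sb w \<sigma> * E) \<le> 2 * ennreal ((S + M w) * E)"
        by (intro mult_left_mono ennreal_leI) auto
      also have "\<dots> = ennreal (2 * (S + M w) * E)"
        unfolding mult.assoc[of 2] by (subst ennreal_mult') auto
      finally show ?case .
    qed
    then have "(\<integral>\<^sup>+ \<sigma>. 2 * ennreal (Sb w \<sigma> * E) \<partial>B (v - w)) \<le> (\<integral>\<^sup>+ \<sigma>. ennreal (2 * (S + M w) * E) \<partial>B (v - w))"
      by (rule nn_integral_mono_AE)
    also have "\<dots> = ennreal (2 * (S + M w) * E * norm (v - w))"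
      using E0 S0 M0[of w] by (simp add: collision_kernel_mass[OF ck lbp] ennreal_mult)
    also have "\<dots> \<le> ennreal (E * S * (2 * norm (v - w)) + E * c * W * (1 + norm w powr (p + 1)))"
    proof (intro ennreal_leI)
      have "E * (2 * norm (v - w) * M w) \<le> E * (c * W * (1 + norm w powr (p + 1)))"
        using M2[of w] E0 by (rule mult_left_mono)
      then show "2 * (S + M w) * E * norm (v - w) \<le> E * S * (2 * norm (v - w)) + E * c * W * (1 + norm w powr (p + 1))"
        by (simp add: algebra_simps)
    qed
    also have "\<dots> = ennreal (E * S * (2 * norm (v - w))) + ennreal (E * c * W * (1 + norm w powr (p + 1)))"
      using E0 S0 c0 W0 by (intro ennreal_plus mult_nonneg_nonneg add_nonneg_nonneg) auto
    also have "\<dots> = ennreal (E * S) * ennreal (2 * norm (v - w)) + ennreal (E * c * W) * ennreal (1 + norm w powr (p + 1))"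
      using E0 S0 c0 W0 by (simp add: ennreal_mult')
    finally show ?thesis .
  qed
  have "(\<integral>\<^sup>+ w. \<integral>\<^sup>+ \<sigma>. 2 * ennreal (Sb w \<sigma> * E) \<partial>B (v - w) \<partial>N)
      \<le> (\<integral>\<^sup>+ w. ennreal (E * S) * ennreal (2 * norm (v - w)) + ennreal (E * c * W) * ennreal (1 + norm w powr (p + 1)) \<partial>N)"
    by (intro nn_integral_mono inner)
  also have "\<dots> = ennreal (E * S) * (\<integral>\<^sup>+ w. ennreal (2 * norm (v - w)) \<partial>N)
       + ennreal (E * c * W) * (\<integral>\<^sup>+ w. ennreal (1 + norm w powr (p + 1)) \<partial>N)"
    using N by (simp add: nn_integral_add nn_integral_cmult measurable_cong_sets[OF N refl])
  finally show ?thesis .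
qed

lemma branching_lyapunov_le:
  fixes B :: "'a::euclidean_space \<Rightarrow> 'a measure" and M :: "'a \<Rightarrow> 'a \<Rightarrow> real" and c :: real
  assumes ck: "collision_kernel B" and lbp: "LBP B" and env: "environment \<rho>"
    and u: "s \<le> u" "u \<le> t"
    and incr: "\<And>v w \<sigma>. norm \<sigma> = 1 \<Longrightarrow>
                 weight p (vpost v w \<sigma>) + weight p (vpost_star v w \<sigma>) + weight p w - weight p v \<le> M v w"
    and M0: "\<And>v w. 0 \<le> M v w"
    and M2: "\<And>v w. 2 * norm (v - w) * M v w \<le> c' * weight p v * (1 + norm w powr (p + 1))"
    and c'0: "0 \<le> c'"
  defines "E \<equiv> exp (c * (enn2real (moment_integral p \<rho> s t) - enn2real (moment_integral p \<rho> s u)))"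
  shows "(\<Sum>i<k. \<integral>\<^sup>+ w. \<integral>\<^sup>+ \<sigma>. 2 * lyapunov p c \<rho> s t (ereal u, Suc (Suc k), branch f k i w \<sigma>)
                     \<partial>B (fst (f i) - w) \<partial>\<rho> u)
         \<le> ennreal (total_weight p k f) * (kac_total_rate B \<rho> u k f + ennreal c' * env_moment p \<rho> u) * ennreal E"
proof -
  define S where "S = total_weight p k f"
  have S0: "0 \<le> S" and E0: "0 \<le> E" unfolding S_def E_def by (auto simp: total_weight_nonneg)
  have "(\<Sum>i<k. \<integral>\<^sup>+ w. \<integral>\<^sup>+ \<sigma>. 2 * lyapunov p c \<rho> s t (ereal u, Suc (Suc k), branch f k i w \<sigma>)
                     \<partial>B (fst (f i) - w) \<partial>\<rho> u)
      = (\<Sum>i<k. \<integral>\<^sup>+ w. \<integral>\<^sup>+ \<sigma>. 2 * ennreal (total_weight p (Suc (Suc k)) (branch f k i w \<sigma>) * E)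
                     \<partial>B (fst (f i) - w) \<partial>\<rho> u)"
    using u by (simp add: lyapunov_def E_def)
  also have "\<dots> \<le> (\<Sum>i<k. ennreal (E * S) * kac_rate B \<rho> u (fst (f i))
                     + ennreal (E * c' * weight p (fst (f i))) * env_moment p \<rho> u)"
  proof (intro sum_mono)
    fix i assume i: "i \<in> {..<k}"
    show "(\<integral>\<^sup>+ w. \<integral>\<^sup>+ \<sigma>. 2 * ennreal (total_weight p (Suc (Suc k)) (branch f k i w \<sigma>) * E)
                     \<partial>B (fst (f i) - w) \<partial>\<rho> u)
        \<le> ennreal (E * S) * kac_rate B \<rho> u (fst (f i)) + ennreal (E * c' * weight p (fst (f i))) * env_moment p \<rho> u"
      unfolding kac_rate_eq[OF ck lbp] env_moment_def
    proof (rule branch_integral_le[OF ck lbp environment_sets[OF env]])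
      fix w \<sigma> :: 'a assume "norm \<sigma> = 1"
      then show "total_weight p (Suc (Suc k)) (branch f k i w \<sigma>) \<le> S + M (fst (f i)) w"
        using total_weight_branch[of i k p f w \<sigma>] i incr[of \<sigma> "fst (f i)" w] unfolding S_def by simp
    qed (use M0 M2 E0 S0 c'0 in \<open>auto simp: weight_nonneg\<close>)
  qed
  also have "\<dots> = ennreal (E * S) * kac_total_rate B \<rho> u k f + ennreal (E * c' * S) * env_moment p \<rho> u"
  proof -
    have "(\<Sum>i<k. ennreal (E * c' * weight p (fst (f i)))) = ennreal (\<Sum>i<k. E * c' * weight p (fst (f i)))"
      using E0 c'0 by (intro sum_ennreal) (auto simp: weight_nonneg)
    also have "(\<Sum>i<k. E * c' * weight p (fst (f i))) = E * c' * S"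
      unfolding S_def total_weight_def by (simp add: sum_distrib_left)
    finally have "(\<Sum>i<k. ennreal (E * c' * weight p (fst (f i))) * env_moment p \<rho> u)
        = ennreal (E * c' * S) * env_moment p \<rho> u"
      by (simp add: sum_distrib_right[symmetric])
    then show ?thesis by (simp add: sum.distrib kac_total_rate_def sum_distrib_left)
  qed
  also have "\<dots> = ennreal S * (kac_total_rate B \<rho> u k f + ennreal c' * env_moment p \<rho> u) * ennreal E"
    using E0 S0 c'0 by (simp add: ennreal_mult distrib_left distrib_right mult_ac)
  finally show ?thesis unfolding S_def .
qed

lemma lyapunov_outside_window:
  "lyapunov p c \<rho> s t (\<infinity>, k, f) = 0"
  "t < u \<Longrightarrow> lyapunov p c \<rho> s t (ereal u, k, f) = 0"
  by (simp_all add: lyapunov_def)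

lemma kac_step_lyapunov_le:
  fixes B :: "'a::euclidean_space \<Rightarrow> 'a measure" and M :: "'a \<Rightarrow> 'a \<Rightarrow> real"
  assumes ck: "collision_kernel B" and lbp: "LBP B" and env: "environment \<rho>" and s\<tau>: "s \<le> \<tau>"
    and incr: "\<And>v w \<sigma>. norm \<sigma> = 1 \<Longrightarrow>
                 weight p (vpost v w \<sigma>) + weight p (vpost_star v w \<sigma>) + weight p w - weight p v \<le> M v w"
    and M0: "\<And>v w. 0 \<le> M v w"
    and M2: "\<And>v w. 2 * norm (v - w) * M v w \<le> c' * weight p v * (1 + norm w powr (p + 1))"
    and c'0: "0 \<le> c'"
  shows "kac_step B \<rho> (lyapunov p c \<rho> s t) (ereal \<tau>, k, f) \<le>
     (\<integral>\<^sup>+ u. exp_neg (\<integral>\<^sup>+ r. kac_total_rate B \<rho> r k f * indicator {\<tau>..u} r \<partial>lborel) *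
        (ennreal (total_weight p k f) * (kac_total_rate B \<rho> u k f + ennreal c' * env_moment p \<rho> u)
         * ennreal (exp (c * (enn2real (moment_integral p \<rho> s t) - enn2real (moment_integral p \<rho> s u)))))
        * indicator {\<tau><..t} u \<partial>lborel)"
  unfolding kac_step_def
proof (simp add: lyapunov_outside_window, intro nn_integral_mono)
  fix u
  show "exp_neg (\<integral>\<^sup>+ r. kac_total_rate B \<rho> r k f * indicator {\<tau>..u} r \<partial>lborel)
          * (\<Sum>i<k. \<integral>\<^sup>+ w. \<integral>\<^sup>+ \<sigma>. 2 * lyapunov p c \<rho> s t (ereal u, Suc (Suc k), branch f k i w \<sigma>)
                                \<partial>B (fst (f i) - w) \<partial>\<rho> u) * indicator {\<tau><..} u
        \<le> exp_neg (\<integral>\<^sup>+ r. kac_total_rate B \<rho> r k f * indicator {\<tau>..u} r \<partial>lborel) *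
        (ennreal (total_weight p k f) * (kac_total_rate B \<rho> u k f + ennreal c' * env_moment p \<rho> u)
         * ennreal (exp (c * (enn2real (moment_integral p \<rho> s t) - enn2real (moment_integral p \<rho> s u)))))
        * indicator {\<tau><..t} u"
    using s\<tau> branching_lyapunov_le[OF ck lbp env _ _ incr M0 M2 c'0, where s=s and u=u and t=t and c=c and k=k and f=f]
    by (cases "\<tau> < u"; cases "u \<le> t") (auto simp: lyapunov_outside_window intro: mult_left_mono)
qed

lemma kac_step_after_le:
  assumes "\<tau> \<le> t"
  shows "kac_step B \<rho> (\<lambda>y. indicator {ereal t<..} (fst y)) (ereal \<tau>, k, f)
    \<le> (\<integral>\<^sup>+ u. exp_neg (\<integral>\<^sup>+ r. kac_total_rate B \<rho> r k f * indicator {\<tau>..u} r \<partial>lborel) * kac_total_rate B \<rho> u k f * indicator {t<..} u \<partial>lborel)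
      + exp_neg (\<integral>\<^sup>+ r. kac_total_rate B \<rho> r k f * indicator {\<tau>..} r \<partial>lborel)"
proof -
  have "kac_step B \<rho> (\<lambda>y. indicator {ereal t<..} (fst y)) (ereal \<tau>, k, f)
    = (\<integral>\<^sup>+ u. (exp_neg (\<integral>\<^sup>+ r. kac_total_rate B \<rho> r k f * indicator {\<tau>..u} r \<partial>lborel) *
         (\<Sum>i<k. \<integral>\<^sup>+ w. \<integral>\<^sup>+ \<sigma>. 2 * indicator {ereal t<..} (ereal u) \<partial>B (fst (f i) - w) \<partial>\<rho> u)) * indicator {\<tau><..} u \<partial>lborel)
      + exp_neg (\<integral>\<^sup>+ r. kac_total_rate B \<rho> r k f * indicator {\<tau>..} r \<partial>lborel)"
    by (simp add: kac_step_def)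
  also have "(\<integral>\<^sup>+ u. (exp_neg (\<integral>\<^sup>+ r. kac_total_rate B \<rho> r k f * indicator {\<tau>..u} r \<partial>lborel) *
         (\<Sum>i<k. \<integral>\<^sup>+ w. \<integral>\<^sup>+ \<sigma>. 2 * indicator {ereal t<..} (ereal u) \<partial>B (fst (f i) - w) \<partial>\<rho> u)) * indicator {\<tau><..} u \<partial>lborel)
     = (\<integral>\<^sup>+ u. exp_neg (\<integral>\<^sup>+ r. kac_total_rate B \<rho> r k f * indicator {\<tau>..u} r \<partial>lborel) * kac_total_rate B \<rho> u k f * indicator {t<..} u \<partial>lborel)"
  proof (intro nn_integral_cong)
    fix u
    show "(exp_neg (\<integral>\<^sup>+ r. kac_total_rate B \<rho> r k f * indicator {\<tau>..u} r \<partial>lborel) *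
         (\<Sum>i<k. \<integral>\<^sup>+ w. \<integral>\<^sup>+ \<sigma>. 2 * indicator {ereal t<..} (ereal u) \<partial>B (fst (f i) - w) \<partial>\<rho> u)) * indicator {\<tau><..} u
        = exp_neg (\<integral>\<^sup>+ r. kac_total_rate B \<rho> r k f * indicator {\<tau>..u} r \<partial>lborel) * kac_total_rate B \<rho> u k f * indicator {t<..} u"
    proof (cases "t < u")
      case True
      then show ?thesis using assms by (simp add: kac_total_rate_def kac_rate_def indicator_def)
    qed (simp add: indicator_def)
  qed
  finally show ?thesis by simp
qed

lemma kac_step_until_le:
  shows "kac_step B \<rho> (\<lambda>y. indicator {..ereal t} (fst y)) (ereal \<tau>, k, f)
    \<le> (\<integral>\<^sup>+ u. exp_neg (\<integral>\<^sup>+ r. kac_total_rate B \<rho> r k f * indicator {\<tau>..u} r \<partial>lborel) * kac_total_rate B \<rho> u k f * indicator {\<tau><..t} u \<partial>lborel)"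
proof -
  have "kac_step B \<rho> (\<lambda>y. indicator {..ereal t} (fst y)) (ereal \<tau>, k, f)
    = (\<integral>\<^sup>+ u. (exp_neg (\<integral>\<^sup>+ r. kac_total_rate B \<rho> r k f * indicator {\<tau>..u} r \<partial>lborel) *
         (\<Sum>i<k. \<integral>\<^sup>+ w. \<integral>\<^sup>+ \<sigma>. 2 * indicator {..ereal t} (ereal u) \<partial>B (fst (f i) - w) \<partial>\<rho> u)) * indicator {\<tau><..} u \<partial>lborel)"
    by (simp add: kac_step_def)
  also have "\<dots> = (\<integral>\<^sup>+ u. exp_neg (\<integral>\<^sup>+ r. kac_total_rate B \<rho> r k f * indicator {\<tau>..u} r \<partial>lborel) * kac_total_rate B \<rho> u k f * indicator {\<tau><..t} u \<partial>lborel)"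
  proof (intro nn_integral_cong)
    fix u
    show "(exp_neg (\<integral>\<^sup>+ r. kac_total_rate B \<rho> r k f * indicator {\<tau>..u} r \<partial>lborel) *
         (\<Sum>i<k. \<integral>\<^sup>+ w. \<integral>\<^sup>+ \<sigma>. 2 * indicator {..ereal t} (ereal u) \<partial>B (fst (f i) - w) \<partial>\<rho> u)) * indicator {\<tau><..} u
        = exp_neg (\<integral>\<^sup>+ r. kac_total_rate B \<rho> r k f * indicator {\<tau>..u} r \<partial>lborel) * kac_total_rate B \<rho> u k f * indicator {\<tau><..t} u"
    proof (cases "u \<le> t")
      case True
      then show ?thesis by (simp add: kac_total_rate_def kac_rate_def indicator_def)
    qed (simp add: indicator_def)
  qed
  finally show ?thesis by simp
qed

text \<open>The weight of the particles alive at time t, read off from the state right after the last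
  event before t.\<close>
definition alive_weight :: "real \<Rightarrow> real \<Rightarrow> 'a::euclidean_space kstate \<Rightarrow> ennreal" where
  "alive_weight p t y = indicator {..ereal t} (fst y) * ennreal (total_weight p (fst (snd y)) (snd (snd y)))"

lemma lyapunov_step_moment:
  fixes B :: "'a::euclidean_space \<Rightarrow> 'a measure" and M :: "'a \<Rightarrow> 'a \<Rightarrow> real"
  assumes ck: "collision_kernel B" and lbp: "LBP B" and env: "environment \<rho>"
    and s0: "0 \<le> s" and fin: "moment_integral p \<rho> s t < \<infinity>" and c0: "0 \<le> c"
    and incr: "\<And>v w \<sigma>. norm \<sigma> = 1 \<Longrightarrow>
                 weight p (vpost v w \<sigma>) + weight p (vpost_star v w \<sigma>) + weight p w - weight p v \<le> M v w"
    and M0: "\<And>v w. 0 \<le> M v w"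
    and M2: "\<And>v w. 2 * norm (v - w) * M v w \<le> c * weight p v * (1 + norm w powr (p + 1))"
    and y: "ereal s \<le> fst y"
  shows "alive_weight p t y * kac_step B \<rho> (\<lambda>y. indicator {ereal t<..} (fst y)) y
           + kac_step B \<rho> (lyapunov p c \<rho> s t) y
         \<le> lyapunov p c \<rho> s t y"
  using y
proof (cases rule: kstate_after_start_cases)
  case (finite \<tau> k f)
  note Kh = kac_step_lyapunov_le[OF ck lbp env finite(2) incr M0 M2 c0, of c t k f]
  show ?thesis
  proof (cases "\<tau> \<le> t")
    case False
    then show ?thesis using Kh by (simp add: finite alive_weight_def)
  next
    case True
    define S where "S = total_weight p k f"
    define Q where "Q u = kac_total_rate B \<rho> u k f" for u
    define J where "J = (\<integral>\<^sup>+ u. exp_neg (\<integral>\<^sup>+ r. Q r * indicator {\<tau>..u} r \<partial>lborel)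
              * (ennreal S * (Q u + ennreal c * env_moment p \<rho> u)
                 * ennreal (exp (c * (enn2real (moment_integral p \<rho> s t) - enn2real (moment_integral p \<rho> s u)))))
              * indicator {\<tau><..t} u \<partial>lborel)"
    have S0: "0 \<le> S" unfolding S_def by (rule total_weight_nonneg)
    have Kg: "kac_step B \<rho> (\<lambda>y. indicator {ereal t<..} (fst y)) y
        \<le> exp_neg (\<integral>\<^sup>+ r. Q r * indicator {\<tau>..t} r \<partial>lborel)"
      unfolding finite Q_def
      by (rule order_trans[OF kac_step_after_le[OF True] survival_tail_bound[OF total_rate_measurable[OF ck lbp env] _ True]])
         (use s0 finite in simp)
    have alive: "alive_weight p t y = ennreal S" using True by (simp add: finite alive_weight_def S_def)
    have "alive_weight p t y * kac_step B \<rho> (\<lambda>y. indicator {ereal t<..} (fst y)) y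
            + kac_step B \<rho> (lyapunov p c \<rho> s t) y
        \<le> ennreal S * exp_neg (\<integral>\<^sup>+ r. Q r * indicator {\<tau>..t} r \<partial>lborel) + J"
      unfolding alive using Kg Kh unfolding finite S_def Q_def J_def by (intro add_mono mult_left_mono) auto
    also have "\<dots> = J + ennreal S * exp_neg (\<integral>\<^sup>+ r. Q r * indicator {\<tau>..t} r \<partial>lborel)"
      by (rule add.commute)
    also have "\<dots> \<le> lyapunov p c \<rho> s t y"
      using discounted_survival_bound[OF total_rate_measurable[OF ck lbp env, where k=k and f=f]
              env_moment_measurable[OF env, where p=p] s0 finite(2) True _ c0 S0] fin True finite
      unfolding J_def Q_def by (simp add: lyapunov_def S_def moment_integral_def)
    finally show ?thesis .
  qed
qed (simp add: alive_weight_def kac_step_def)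

text \<open>For counting events: the total jump rate is at most 3 \<langle>W_2, \<Lambda>\<rangle> times the moment, and
  this rate can be absorbed into the Lyapunov function for p = 2 by raising c from 8 to 11.\<close>
lemma total_rate_le_moment:
  assumes ck: "collision_kernel B" and lbp: "LBP B" and env: "environment \<rho>"
  shows "kac_total_rate B \<rho> u k f \<le> ennreal (3 * total_weight 2 k f) * env_moment 2 \<rho> u"
proof -
  have "kac_total_rate B \<rho> u k f = (\<Sum>i<k. \<integral>\<^sup>+ w. ennreal (2 * norm (fst (f i) - w)) \<partial>\<rho> u)"
    unfolding kac_total_rate_def kac_rate_eq[OF ck lbp] ..
  also have "\<dots> \<le> (\<Sum>i<k. \<integral>\<^sup>+ w. ennreal (3 * weight 2 (fst (f i))) * ennreal (1 + norm w powr (2 + 1)) \<partial>\<rho> u)"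
  proof (intro sum_mono nn_integral_mono)
    fix i w
    have "ennreal (2 * norm (fst (f i) - w)) \<le> ennreal (3 * weight 2 (fst (f i)) * (1 + norm w powr (2 + 1)))"
      by (intro ennreal_leI) (rule collision_rate_le_weight)
    also have "\<dots> = ennreal (3 * weight 2 (fst (f i))) * ennreal (1 + norm w powr (2 + 1))"
      by (intro ennreal_mult) (auto simp: weight_nonneg)
    finally show "ennreal (2 * norm (fst (f i) - w)) \<le> \<dots>" .
  qed
  also have "\<dots> = (\<Sum>i<k. ennreal (3 * weight 2 (fst (f i)))) * env_moment 2 \<rho> u"
    unfolding env_moment_def sum_distrib_right
    by (intro sum.cong refl nn_integral_cmult) (simp add: environment_measurable_cong[OF env])
  also have "(\<Sum>i<k. ennreal (3 * weight 2 (fst (f i)))) = ennreal (3 * total_weight 2 k f)"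
    unfolding total_weight_def sum_distrib_left by (intro sum_ennreal) (simp add: weight_nonneg)
  finally show ?thesis .
qed

lemma count_integral_absorbed:
  fixes F Q m :: "real \<Rightarrow> ennreal" and E :: "real \<Rightarrow> real"
  assumes Q: "\<And>u. u \<in> D \<Longrightarrow> Q u \<le> ennreal (3 * S) * m u" and S0: "0 \<le> S"
    and E1: "\<And>u. u \<in> D \<Longrightarrow> 1 \<le> E u"
  shows "(\<integral>\<^sup>+ u. F u * Q u * indicator D u \<partial>lborel)
           + (\<integral>\<^sup>+ u. F u * (ennreal S * (Q u + ennreal 8 * m u) * ennreal (E u)) * indicator D u \<partial>lborel)
         \<le> (\<integral>\<^sup>+ u. F u * (ennreal S * (Q u + ennreal 11 * m u) * ennreal (E u)) * indicator D u \<partial>lborel)"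
proof -
  have absorbed: "Q u + ennreal S * (Q u + ennreal 8 * m u) * ennreal (E u)
      \<le> ennreal S * (Q u + ennreal 11 * m u) * ennreal (E u)" if u: "u \<in> D" for u
  proof -
    have "Q u \<le> ennreal S * (ennreal 3 * m u) * 1" using Q[OF u] S0 by (simp add: ennreal_mult mult_ac)
    also have "\<dots> \<le> ennreal S * (ennreal 3 * m u) * ennreal (E u)"
      using E1[OF u] by (intro mult_left_mono) (auto simp: ennreal_leI[of 1, simplified])
    finally have "Q u + ennreal S * (Q u + ennreal 8 * m u) * ennreal (E u)
        \<le> ennreal S * (ennreal 3 * m u) * ennreal (E u) + ennreal S * (Q u + ennreal 8 * m u) * ennreal (E u)"
      by (rule add_right_mono)
    also have "ennreal 11 * m u = ennreal 8 * m u + ennreal 3 * m u"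
      by (simp add: distrib_right[symmetric] ennreal_plus[symmetric] del: ennreal_plus)
    then have "ennreal S * (ennreal 3 * m u) * ennreal (E u) + ennreal S * (Q u + ennreal 8 * m u) * ennreal (E u)
        = ennreal S * (Q u + ennreal 11 * m u) * ennreal (E u)"
      by (simp add: distrib_left distrib_right mult_ac add_ac)
    finally show ?thesis .
  qed
  have "(\<integral>\<^sup>+ u. F u * Q u * indicator D u \<partial>lborel)
          + (\<integral>\<^sup>+ u. F u * (ennreal S * (Q u + ennreal 8 * m u) * ennreal (E u)) * indicator D u \<partial>lborel)
      \<le> (\<integral>\<^sup>+ u. F u * Q u * indicator D u
                 + F u * (ennreal S * (Q u + ennreal 8 * m u) * ennreal (E u)) * indicator D u \<partial>lborel)"
    by (rule nn_integral_superadd)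
  also have "\<dots> \<le> (\<integral>\<^sup>+ u. F u * (ennreal S * (Q u + ennreal 11 * m u) * ennreal (E u)) * indicator D u \<partial>lborel)"
  proof (intro nn_integral_mono)
    fix u
    show "F u * Q u * indicator D u + F u * (ennreal S * (Q u + ennreal 8 * m u) * ennreal (E u)) * indicator D u
        \<le> F u * (ennreal S * (Q u + ennreal 11 * m u) * ennreal (E u)) * indicator D u"
      using absorbed[of u] by (cases "u \<in> D") (simp_all add: distrib_left[symmetric] mult.assoc mult_left_mono)
  qed
  finally show ?thesis .
qed

lemma moment_integral_mono: "u \<le> u' \<Longrightarrow> moment_integral p \<rho> s u \<le> moment_integral p \<rho> s u'"
  unfolding moment_integral_def by (intro nn_integral_mono) (auto simp: indicator_def)

lemma lyapunov_step_count:
  fixes B :: "'a::euclidean_space \<Rightarrow> 'a measure"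
  assumes ck: "collision_kernel B" and lbp: "LBP B" and env: "environment \<rho>"
    and s0: "0 \<le> s" and fin: "moment_integral 2 \<rho> s t < \<infinity>" and y: "ereal s \<le> fst y"
  shows "1 * kac_step B \<rho> (\<lambda>y. indicator {..ereal t} (fst y)) y + kac_step B \<rho> (lyapunov 2 11 \<rho> s t) y
         \<le> lyapunov 2 11 \<rho> s t y"
  using y
proof (cases rule: kstate_after_start_cases)
  case (finite \<tau> k f)
  define S where "S = total_weight 2 k f"
  define Q where "Q u = kac_total_rate B \<rho> u k f" for u
  define eF where "eF u = exp_neg (\<integral>\<^sup>+ r. Q r * indicator {\<tau>..u} r \<partial>lborel)" for u
  define E where "E u = exp (11 * (enn2real (moment_integral 2 \<rho> s t) - enn2real (moment_integral 2 \<rho> s u)))" for u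
  have S0: "0 \<le> S" unfolding S_def by (rule total_weight_nonneg)
  have Kg: "kac_step B \<rho> (\<lambda>y. indicator {..ereal t} (fst y)) y \<le> (\<integral>\<^sup>+ u. eF u * Q u * indicator {\<tau><..t} u \<partial>lborel)"
    unfolding finite eF_def Q_def by (rule kac_step_until_le)
  have Kh: "kac_step B \<rho> (lyapunov 2 11 \<rho> s t) y
      \<le> (\<integral>\<^sup>+ u. eF u * (ennreal S * (Q u + ennreal 8 * env_moment 2 \<rho> u) * ennreal (E u)) * indicator {\<tau><..t} u \<partial>lborel)"
    unfolding finite eF_def Q_def S_def E_def
    by (rule kac_step_lyapunov_le[OF ck lbp env finite(2) weight_increment_le_2 _ weight_increment_rate_le_2]) auto
  show ?thesis
  proof (cases "\<tau> \<le> t")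
    case False
    then show ?thesis using Kg Kh by (simp add: finite)
  next
    case True
    have E1: "1 \<le> E u" if "u \<le> t" for u
      using enn2real_mono[OF moment_integral_mono[OF that]] fin unfolding E_def by simp
    have "1 * kac_step B \<rho> (\<lambda>y. indicator {..ereal t} (fst y)) y + kac_step B \<rho> (lyapunov 2 11 \<rho> s t) y
        \<le> (\<integral>\<^sup>+ u. eF u * Q u * indicator {\<tau><..t} u \<partial>lborel)
          + (\<integral>\<^sup>+ u. eF u * (ennreal S * (Q u + ennreal 8 * env_moment 2 \<rho> u) * ennreal (E u)) * indicator {\<tau><..t} u \<partial>lborel)"
      using Kg Kh by (simp add: add_mono)
    also have "\<dots> \<le> (\<integral>\<^sup>+ u. eF u * (ennreal S * (Q u + ennreal 11 * env_moment 2 \<rho> u) * ennreal (E u))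
                              * indicator {\<tau><..t} u \<partial>lborel)"
      using total_rate_le_moment[OF ck lbp env] S0 E1 unfolding Q_def S_def
      by (intro count_integral_absorbed) auto
    also have "\<dots> \<le> (\<integral>\<^sup>+ u. eF u * (ennreal S * (Q u + ennreal 11 * env_moment 2 \<rho> u) * ennreal (E u))
                              * indicator {\<tau><..t} u \<partial>lborel) + ennreal S * eF t"
      by (rule add_increasing2) auto
    also have "\<dots> \<le> ennreal (S * E \<tau>)"
      using discounted_survival_bound[OF total_rate_measurable[OF ck lbp env, where k=k and f=f]
              env_moment_measurable[OF env, where p=2] s0 finite(2) True _ _ S0, of 11] fin
      unfolding eF_def Q_def E_def moment_integral_def by simp
    also have "\<dots> = lyapunov 2 11 \<rho> s t y"
      using True finite by (simp add: lyapunov_def S_def E_def)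
    finally show ?thesis .
  qed
qed (simp add: kac_step_def)

section \<open>Moment bound and non-explosion\<close>

lemma kstate_fst_measurable [measurable]:
  "fst \<in> measurable (kstate_space :: 'a::euclidean_space kstate measure) borel"
  unfolding kstate_space_def by measurable

lemma total_weight_measurable [measurable]:
  "(\<lambda>y. total_weight p (fst (snd y)) (snd (snd y))) \<in> borel_measurable (kstate_space :: 'a::euclidean_space kstate measure)"
proof -
  have "(\<lambda>y. \<Sum>i<k. weight p (fst (snd (snd y) i))) \<in> borel_measurable (kstate_space :: 'a kstate measure)" for k
    unfolding kstate_space_def weight_def by measurable
  moreover have "(\<lambda>y. fst (snd y)) \<in> measurable (kstate_space :: 'a kstate measure) (count_space UNIV)"
    unfolding kstate_space_def by measurable
  ultimately show ?thesis
    unfolding total_weight_def by (rule measurable_compose_countable[where f="\<lambda>k y. \<Sum>i<k. _ y i"])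
qed

lemma moment_integral_measurable [measurable]:
  assumes "environment \<rho>" and "0 \<le> s"
  shows "moment_integral p \<rho> s \<in> borel_measurable borel"
proof -
  have "moment_integral p \<rho> s = (\<lambda>u. \<integral>\<^sup>+ r. (indicator {0..} r * env_moment p \<rho> r) * indicator {s..u} r \<partial>lborel)"
    unfolding moment_integral_def using assms(2) by (intro ext nn_integral_restrict_nonneg) auto
  also have "\<dots> \<in> borel_measurable borel" using assms(1) by measurable
  finally show ?thesis .
qed

lemma lyapunov_measurable [measurable]:
  assumes "environment \<rho>" and "0 \<le> s"
  shows "lyapunov p c \<rho> s t \<in> borel_measurable (kstate_space :: 'a::euclidean_space kstate measure)"
  using moment_integral_measurable[OF assms] unfolding lyapunov_def[abs_def] by measurable

lemma alive_weight_measurable [measurable]: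
  "alive_weight p t \<in> borel_measurable (kstate_space :: 'a::euclidean_space kstate measure)"
  unfolding alive_weight_def[abs_def] by measurable

lemma kac_pairing_weight:
  fixes X :: "nat \<Rightarrow> 'w \<Rightarrow> 'a::euclidean_space kstate"
  shows "kac_pairing X (\<lambda>v. 1 + norm v powr p) t \<omega>
     = (\<Sum>n. alive_weight p t (X n \<omega>) * indicator {ereal t<..} (fst (X (Suc n) \<omega>)))"
proof -
  have "(\<Sum>i < k. ennreal (1 + norm (fst (f i)) powr p)) = ennreal (total_weight p k f)" for k and f :: "nat \<Rightarrow> 'a \<times> bool"
    unfolding total_weight_def weight_def by (intro sum_ennreal) (smt (verit) powr_ge_zero)
  then show ?thesis
    unfolding kac_pairing_def by (intro suminf_cong) (simp add: alive_weight_def indicator_def)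
qed

lemma moment_bound_general:
  fixes B :: "'a::euclidean_space \<Rightarrow> 'a measure" and M :: "'a \<Rightarrow> 'a \<Rightarrow> real"
  assumes ck: "collision_kernel B" and lbp: "LBP B" and env: "environment \<rho>"
    and s0: "0 \<le> s" and P: "lin_kac_process B \<rho> s v0 \<Omega> X" and st: "s \<le> t"
    and c0: "0 \<le> c"
    and incr: "\<And>v w \<sigma>. norm \<sigma> = 1 \<Longrightarrow>
                 weight p (vpost v w \<sigma>) + weight p (vpost_star v w \<sigma>) + weight p w - weight p v \<le> M v w"
    and M0: "\<And>v w. 0 \<le> M v w"
    and M2: "\<And>v w. 2 * norm (v - w) * M v w \<le> c * weight p v * (1 + norm w powr (p + 1))"
  shows "kac_moment_bound B \<rho> s v0 \<Omega> X p c t"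
  unfolding kac_moment_bound_def Let_def
proof
  assume "(\<integral>\<^sup>+ r \<in> {s..t}. (\<integral>\<^sup>+ v. ennreal (1 + norm v powr (p + 1)) \<partial>\<rho> r) \<partial>lborel) < \<infinity>"
  then have fin: "moment_integral p \<rho> s t < \<infinity>" by (simp add: moment_integral_def env_moment_def)
  have "(\<integral>\<^sup>+ \<omega>. kac_pairing X (\<lambda>v. 1 + norm v powr p) t \<omega> \<partial>\<Omega>)
      = (\<integral>\<^sup>+ \<omega>. (\<Sum>n. alive_weight p t (X n \<omega>) * indicator {ereal t<..} (fst (X (Suc n) \<omega>))) \<partial>\<Omega>)"
    by (simp add: kac_pairing_weight)
  also have "\<dots> \<le> lyapunov p c \<rho> s t (ereal s, 1, \<lambda>_. (v0, True))"
    by (intro lyapunov_telescoping[OF P alive_weight_measurable _ lyapunov_measurable[OF env s0]]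
              lyapunov_step_moment[OF ck lbp env s0 fin c0 incr M0 M2]) measurable
  also have "\<dots> = ennreal ((1 + norm v0 powr p) * exp (c * enn2real (moment_integral p \<rho> s t)))"
    using st by (simp add: lyapunov_def total_weight_def weight_def moment_integral_def)
  finally show "(\<integral>\<^sup>+ \<omega>. kac_pairing X (\<lambda>v. 1 + norm v powr p) t \<omega> \<partial>\<Omega>)
      \<le> ennreal ((1 + norm v0 powr p) * exp (c * enn2real
            (\<integral>\<^sup>+ r \<in> {s..t}. (\<integral>\<^sup>+ v. ennreal (1 + norm v powr (p + 1)) \<partial>\<rho> r) \<partial>lborel)))"
    by (simp add: moment_integral_def env_moment_def)
qed

text \<open>The third-moment assumption on environments makes I(t) finite for p = 2.\<close>
lemma moment_integral_2_finite:
  fixes \<rho> :: "real \<Rightarrow> 'a::euclidean_space measure"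
  assumes env: "environment \<rho>" and s0: "0 \<le> s"
  shows "moment_integral 2 \<rho> s t < \<infinity>"
proof (cases "s \<le> t")
  case True
  then have t0: "0 \<le> t" using s0 by simp
  define N3 where "N3 r = (\<integral>\<^sup>+ v. ennreal (norm v ^ 3) \<partial>\<rho> r)" for r
  have [measurable]: "(\<lambda>r. indicator {0..} r * N3 r) \<in> borel_measurable borel"
    unfolding N3_def by (rule environment_integral_measurable[OF env]) measurable
  have N3_fin: "(\<integral>\<^sup>+ r. N3 r * indicator {0..t} r \<partial>lborel) < \<infinity>"
    using env t0 unfolding environment_def N3_def by auto
  have moment_le: "env_moment 2 \<rho> r \<le> 1 + N3 r" if "0 \<le> r" for r
  proof -
    have "env_moment 2 \<rho> r = (\<integral>\<^sup>+ w. 1 + ennreal (norm w ^ 3) \<partial>\<rho> r)"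
      unfolding env_moment_def by (intro nn_integral_cong) (simp add: ennreal_plus)
    also have "\<dots> = emeasure (\<rho> r) (space (\<rho> r)) + N3 r"
      unfolding N3_def by (subst nn_integral_add) (auto simp: environment_measurable_cong[OF env])
    also have "\<dots> \<le> 1 + N3 r" using environment_mass[OF env that] by (intro add_right_mono)
    finally show ?thesis .
  qed
  have "moment_integral 2 \<rho> s t \<le> (\<integral>\<^sup>+ r. indicator {0..t} r + (indicator {0..} r * N3 r) * indicator {0..t} r \<partial>lborel)"
    unfolding moment_integral_def
    using s0 moment_le by (intro nn_integral_mono) (auto simp: indicator_def)
  also have "\<dots> = emeasure lborel {0..t} + (\<integral>\<^sup>+ r. N3 r * indicator {0..t} r \<partial>lborel)"
    using nn_integral_restrict_nonneg[of "{0..t}" N3] by (subst nn_integral_add) auto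
  also have "\<dots> < \<infinity>" using N3_fin t0 by simp
  finally show ?thesis .
qed (simp add: moment_integral_def)

lemma finite_indicator_sum_eventually:
  assumes "(\<Sum>n. (indicator A (a n) :: ennreal)) \<noteq> \<infinity>"
  shows "eventually (\<lambda>n. a n \<notin> A) sequentially"
proof -
  have "summable (\<lambda>n. indicator A (a n) :: real)"
    using assms by (intro summable_suminf_not_top) (simp_all add: ennreal_indicator)
  then have "(\<lambda>n. indicator A (a n) :: real) \<longlonglongrightarrow> 0" by (rule summable_LIMSEQ_zero)
  then have "eventually (\<lambda>n. (indicator A (a n) :: real) < 1) sequentially"
    by (rule order_tendstoD) simp
  then show ?thesis by eventually_elim (auto simp: indicator_def)
qed

text \<open>Non-explosion: the expected number of events up to time t is at most the Lyapunov
  function with p = 2, c = 11 at the start, which is finite; so almost surely only finitely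
  many event times fall below any t.\<close>
lemma nonexplosion:
  fixes B :: "'a::euclidean_space \<Rightarrow> 'a measure"
  assumes ck: "collision_kernel B" and lbp: "LBP B" and env: "environment \<rho>"
    and s0: "0 \<le> s" and P: "lin_kac_process B \<rho> s v0 M X"
  shows "AE \<omega> in M. (\<lambda>n. fst (X n \<omega>)) \<longlonglongrightarrow> \<infinity>"
proof -
  interpret prob_space M using lin_kac_processD(1)[OF P] .
  note X [measurable] = lin_kac_processD(2)[OF P]
  have finitely_many: "AE \<omega> in M. eventually (\<lambda>n. ereal t < fst (X (Suc n) \<omega>)) sequentially" for t
  proof -
    have "(\<integral>\<^sup>+ \<omega>. (\<Sum>n. 1 * indicator {..ereal t} (fst (X (Suc n) \<omega>))) \<partial>M)
        \<le> lyapunov 2 11 \<rho> s t (ereal s, 1, \<lambda>_. (v0, True))"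
      using lyapunov_step_count[OF ck lbp env s0 moment_integral_2_finite[OF env s0]]
      by (intro lyapunov_telescoping[OF P, where \<phi>="\<lambda>_. 1" and g="\<lambda>y. indicator {..ereal t} (fst y)"]
                lyapunov_measurable[OF env s0]) auto
    also have "\<dots> < \<infinity>" by (simp add: lyapunov_def indicator_def)
    finally have "AE \<omega> in M. (\<Sum>n. indicator {..ereal t} (fst (X (Suc n) \<omega>)) :: ennreal) \<noteq> \<infinity>"
      by (intro nn_integral_PInf_AE) auto
    then show ?thesis
      by eventually_elim (use finite_indicator_sum_eventually in \<open>force simp: not_le\<close>)
  qed
  have "AE \<omega> in M. \<forall>N::nat. eventually (\<lambda>n. ereal (real N) < fst (X (Suc n) \<omega>)) sequentially"
    using finitely_many by (simp add: AE_all_countable)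
  then show ?thesis
  proof eventually_elim
    case (elim \<omega>)
    show ?case unfolding tendsto_PInfty
    proof
      fix r :: real
      obtain N :: nat where N: "ereal r < ereal (real N)" using reals_Archimedean2 by auto
      have "eventually (\<lambda>n. ereal (real N) < fst (X (Suc n) \<omega>)) sequentially" using elim by blast
      then have "eventually (\<lambda>n. ereal r < fst (X (Suc n) \<omega>)) sequentially"
        by eventually_elim (use N in \<open>rule less_trans\<close>)
      then show "eventually (\<lambda>n. ereal r < fst (X n \<omega>)) sequentially"
        by (rule eventually_sequentially_Suc[THEN iffD1])
    qed
  qed
qed

text \<open>The theorem: non-explosion, the moment bound with c(p) = moment_const p, and c(2) = 8.\<close>
theorem proposition4p1:
  assumes "DIM('a::euclidean_space) \<ge> 2"
  shows "(\<forall>(B :: 'a \<Rightarrow> 'a measure) \<rho> s v0 (M :: 'w measure) X.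
            collision_kernel B \<and> LBP B \<and> environment \<rho> \<and> s \<ge> 0 \<and>
            lin_kac_process B \<rho> s v0 M X \<longrightarrow>
            (AE \<omega> in M. (\<lambda>n. fst (X n \<omega>)) \<longlonglongrightarrow> \<infinity>))
       \<and> (\<forall>p::real. p \<ge> 2 \<longrightarrow> (\<exists>c::real.
            \<forall>(B :: 'a \<Rightarrow> 'a measure) \<rho> s v0 (M :: 'w measure) X t.
            collision_kernel B \<and> LBP B \<and> environment \<rho> \<and> s \<ge> 0 \<and>
            lin_kac_process B \<rho> s v0 M X \<and> t \<ge> s \<longrightarrow>
            kac_moment_bound B \<rho> s v0 M X p c t))
       \<and> (\<forall>(B :: 'a \<Rightarrow> 'a measure) \<rho> s v0 (M :: 'w measure) X t.
            collision_kernel B \<and> LBP B \<and> environment \<rho> \<and> s \<ge> 0 \<and>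
            lin_kac_process B \<rho> s v0 M X \<and> t \<ge> s \<longrightarrow>
            kac_moment_bound B \<rho> s v0 M X 2 8 t)"
proof (intro conjI allI impI)
  fix B :: "'a \<Rightarrow> 'a measure" and \<rho> s v0 and M :: "'w measure" and X
  assume "collision_kernel B \<and> LBP B \<and> environment \<rho> \<and> s \<ge> 0 \<and> lin_kac_process B \<rho> s v0 M X"
  then show "AE \<omega> in M. (\<lambda>n. fst (X n \<omega>)) \<longlonglongrightarrow> \<infinity>"
    using nonexplosion by blast
next
  fix p :: real assume p: "2 \<le> p"
  show "\<exists>c. \<forall>(B :: 'a \<Rightarrow> 'a measure) \<rho> s v0 (M :: 'w measure) X t.
          collision_kernel B \<and> LBP B \<and> environment \<rho> \<and> s \<ge> 0 \<and>
          lin_kac_process B \<rho> s v0 M X \<and> t \<ge> s \<longrightarrow> kac_moment_bound B \<rho> s v0 M X p c t"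
    using p by (intro exI[of _ "moment_const p"] allI impI)
      (auto intro!: moment_bound_general[where M="\<lambda>v w. increment_bound p (norm v) (norm w)"]
                    weight_increment_le weight_increment_rate_le moment_const_nonneg increment_bound_nonneg)
next
  fix B :: "'a \<Rightarrow> 'a measure" and \<rho> s v0 and M :: "'w measure" and X t
  assume "collision_kernel B \<and> LBP B \<and> environment \<rho> \<and> s \<ge> 0 \<and> lin_kac_process B \<rho> s v0 M X \<and> t \<ge> s"
  then show "kac_moment_bound B \<rho> s v0 M X 2 8 t"
    by (auto intro!: moment_bound_general[where M="\<lambda>v w. 2 + 2 * norm w ^ 2"]
                     weight_increment_le_2 weight_increment_rate_le_2)
qed

end
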